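(* If $L$ is a lattice, then there is a natural bijection between marked reflection structures on $L$ and root systems in $L$.
   Context: A lattice is a free abelian group of finite rank. A reflection on $L$ is an automorphism conjugate in $\mathrm{Aut}(\mathbb{Q}\otimes L)\cong GL(r,\mathbb{Q})$ to $\mathrm{diag}(-1,1,\dots,1)$. A strict marking for a reflection $\sigma$ is a pair $(b,\beta)$ with $b\in L$ and $\beta:L\to\mathbb{Z}$ a homomorphism such that $\sigma(x)=x+\beta(x)b$ for all $x\in L$; a marking is an equivalence class $\pm(b,\beta)$ of strict markings up to sign. For $w\in\mathrm{Aut}(L)$, $w\cdot(b,\beta)=(w(b),\beta\circ w^{-1})$, a marking for $w\sigma w^{-1}$. A marked reflection structure on $L$ is a finite subgroup $W\subset\mathrm{Aut}(L)$ generated by the reflections it contains, together with a marking $\pm(b_\sigma,\beta_\sigma)$ for each reflection $\sigma\in W$ such that $w\cdot(b_\sigma,\beta_\sigma)=\pm(b_{w\sigma w^{-1}},\beta_{w\sigma w^{-1}})$ for all $w\in W$. A root system in $L$ is a finite subset $R\subset L$ together with, for each $r\in R$, a homomorphism $n_r:L\to\mathbb{Z}$, such that: (R1) $R$ and $\bigcap_r\ker(n_r)$ together span $\mathbb{Q}\otimes L$; (R2) $n_r(r)=-2$; (R3) if $r\in R$, $k\in\mathbb{Z}$ and $kr\in R$ then $k=\pm1$; (R4) if $r,t\in R$ then $t+n_r(t)r\in R$. *)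

theory Defs
  imports "HOL-Analysis.Analysis"
begin

text \<open>The lattice L is modelled as int^'n (rank CARD('n)); Q (x) L as rat^'n.\<close>

type_synonym 'n lat = "int ^ 'n"
type_synonym 'n dual = "int ^ 'n \<Rightarrow> int"

definition hom_Z :: "('n::finite) dual \<Rightarrow> bool" where
  "hom_Z \<beta> \<longleftrightarrow> (\<forall>x y. \<beta> (x + y) = \<beta> x + \<beta> y)"

definition Aut :: "(('n::finite) lat \<Rightarrow> 'n lat) set" where
  "Aut = {\<sigma>. bij \<sigma> \<and> (\<forall>x y. \<sigma> (x + y) = \<sigma> x + \<sigma> y)}"

definition toQ :: "('n::finite) lat \<Rightarrow> rat ^ 'n" where
  "toQ x = (\<chi> i. of_int (x $ i))"

definition qmat :: "(('n::finite) lat \<Rightarrow> 'n lat) \<Rightarrow> rat ^ 'n ^ 'n" where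
  "qmat \<sigma> = (\<chi> i j. of_int ((\<sigma> (axis j 1)) $ i))"

definition diag_refl :: "'n::finite \<Rightarrow> rat ^ 'n ^ 'n" where
  "diag_refl k = (\<chi> i j. if i = j then (if i = k then -1 else 1) else 0)"

definition reflection :: "(('n::finite) lat \<Rightarrow> 'n lat) \<Rightarrow> bool" where
  "reflection \<sigma> \<longleftrightarrow> \<sigma> \<in> Aut \<and>
     (\<exists>(P :: rat ^ 'n ^ 'n) (Q :: rat ^ 'n ^ 'n) k. P ** Q = mat 1 \<and> Q ** P = mat 1 \<and> P ** qmat \<sigma> ** Q = diag_refl k)"

definition strict_marking :: "(('n::finite) lat \<Rightarrow> 'n lat) \<Rightarrow> 'n lat \<Rightarrow> 'n dual \<Rightarrow> bool" where
  "strict_marking \<sigma> b \<beta> \<longleftrightarrow> hom_Z \<beta> \<and> (\<forall>x. \<sigma> x = x + \<beta> x *s b)"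

definition pm :: "('n::finite) lat \<Rightarrow> 'n dual \<Rightarrow> ('n lat \<times> 'n dual) set" where
  "pm b \<beta> = {(b, \<beta>), (- b, \<lambda>x. - \<beta> x)}"

definition is_marking :: "(('n::finite) lat \<Rightarrow> 'n lat) \<Rightarrow> ('n lat \<times> 'n dual) set \<Rightarrow> bool" where
  "is_marking \<sigma> M \<longleftrightarrow> (\<exists>b \<beta>. strict_marking \<sigma> b \<beta> \<and> M = pm b \<beta>)"

definition act_marking :: "(('n::finite) lat \<Rightarrow> 'n lat) \<Rightarrow> ('n lat \<times> 'n dual) set \<Rightarrow> ('n lat \<times> 'n dual) set" where
  "act_marking w M = (\<lambda>(b, \<beta>). (w b, \<beta> \<circ> inv w)) ` M"

definition gen_group :: "(('n::finite) lat \<Rightarrow> 'n lat) set \<Rightarrow> ('n lat \<Rightarrow> 'n lat) set" where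
  "gen_group S = \<Inter> {H. id \<in> H \<and> S \<subseteq> H \<and> (\<forall>f\<in>H. \<forall>g\<in>H. f \<circ> g \<in> H) \<and> (\<forall>f\<in>H. inv f \<in> H)}"

definition is_subgroup_Aut :: "(('n::finite) lat \<Rightarrow> 'n lat) set \<Rightarrow> bool" where
  "is_subgroup_Aut W \<longleftrightarrow> W \<subseteq> Aut \<and> id \<in> W \<and> (\<forall>f\<in>W. \<forall>g\<in>W. f \<circ> g \<in> W) \<and> (\<forall>f\<in>W. inv f \<in> W)"

text \<open>A marked reflection structure (W, m); m assigns to each reflection of W its marking
  (and, as a normalisation, the empty set to all other maps).\<close>
definition marked_reflection_structure ::
  "(('n::finite) lat \<Rightarrow> 'n lat) set \<Rightarrow> (('n lat \<Rightarrow> 'n lat) \<Rightarrow> ('n lat \<times> 'n dual) set) \<Rightarrow> bool" where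
  "marked_reflection_structure W m \<longleftrightarrow>
     finite W \<and> is_subgroup_Aut W \<and> W = gen_group {\<sigma>\<in>W. reflection \<sigma>} \<and>
     (\<forall>\<sigma>. \<sigma> \<in> W \<and> reflection \<sigma> \<longrightarrow> is_marking \<sigma> (m \<sigma>)) \<and>
     (\<forall>\<sigma>. \<not> (\<sigma> \<in> W \<and> reflection \<sigma>) \<longrightarrow> m \<sigma> = {}) \<and>
     (\<forall>w\<in>W. \<forall>\<sigma>\<in>W. reflection \<sigma> \<longrightarrow> act_marking w (m \<sigma>) = m (w \<circ> \<sigma> \<circ> inv w))"

text \<open>A root system (R, n) in L; n is normalised to 0 off R.\<close>
definition root_system :: "('n::finite) lat set \<Rightarrow> ('n lat \<Rightarrow> 'n dual) \<Rightarrow> bool" where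
  "root_system R n \<longleftrightarrow>
     finite R \<and> (\<forall>r\<in>R. hom_Z (n r)) \<and> (\<forall>r. r \<notin> R \<longrightarrow> n r = (\<lambda>_. 0)) \<and>
     vec.span (toQ ` (R \<union> (\<Inter>r\<in>R. {x. n r x = 0}))) = UNIV \<and>
     (\<forall>r\<in>R. n r r = -2) \<and>
     (\<forall>r\<in>R. \<forall>k::int. k *s r \<in> R \<longrightarrow> k = 1 \<or> k = -1) \<and>
     (\<forall>r\<in>R. \<forall>t\<in>R. t + n r t *s r \<in> R)"

definition root_refl :: "('n::finite) lat \<Rightarrow> 'n dual \<Rightarrow> 'n lat \<Rightarrow> 'n lat" where
  "root_refl r \<beta> = (\<lambda>x. x + \<beta> x *s r)"

definition rs_to_mrs :: "('n::finite) lat set \<times> ('n lat \<Rightarrow> 'n dual) \<Rightarrow>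
    ('n lat \<Rightarrow> 'n lat) set \<times> (('n lat \<Rightarrow> 'n lat) \<Rightarrow> ('n lat \<times> 'n dual) set)" where
  "rs_to_mrs Rn = (let R = fst Rn; n = snd Rn;
                       W = gen_group ((\<lambda>r. root_refl r (n r)) ` R)
     in (W, \<lambda>\<sigma>. if \<sigma> \<in> W \<and> reflection \<sigma>
                 then (\<Union>r\<in>{r\<in>R. root_refl r (n r) = \<sigma>}. pm r (n r)) else {}))"

end

(*
  Since R together with the common kernel of the n_r spans, W is finite.

  Finiteness drives everything through one observation: a transvection x |-> x + phi(x) v
  with phi(v) = 0 has infinite order unless it is trivial. Applied to s_(wr) o w s_r w^-1 it
  gives the equivariance n_(wr) = n_r o w^-1; applied to the product of two reflections with
  parallel marking vectors it shows that a marking vector determines its reflection; and it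
  shows that a reflection t in W equals s_r as soon as n_r vanishes on the fixed lattice of t.
  The remaining case, where no n_r does, is excluded by a sign character: a fixed point x of
  t could then be chosen regular, and the character of W sending w to (-1)^N, where N counts
  the roots p with n_p(x) < 0 and n_(wp)(x) > 0, agrees with det yet is 1 on t, while
  det t = -1. So the reflections of W are exactly the s_r, and the two constructions are
  mutually inverse; for the spanning axiom (R1) one averages over the finite group W.
*)
theory Submission
  imports Defs
begin

section \<open>Additive maps on the lattice and their rational matrices\<close>

lemma hom_Z_iff_additive: "hom_Z \<beta> \<longleftrightarrow> Modules.additive \<beta>"
  unfolding hom_Z_def Modules.additive_def by blast

lemma Aut_iff: "f \<in> Aut \<longleftrightarrow> bij f \<and> Modules.additive f"
  unfolding Aut_def Modules.additive_def by blast

lemma additive_comp: "Modules.additive f \<Longrightarrow> Modules.additive g \<Longrightarrow> Modules.additive (f \<circ> g)"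
  unfolding Modules.additive_def by simp

lemma additive_inv:
  assumes "bij f" and "Modules.additive f"
  shows "Modules.additive (inv f)"
proof
  fix x y
  have "f (inv f x + inv f y) = x + y"
    using assms by (simp add: additive.add[OF assms(2)] bij_is_surj surj_f_inv_f)
  then show "inv f (x + y) = inv f x + inv f y"
    using assms(1) by (metis bij_inv_eq_iff)
qed

lemma additive_id: "Modules.additive id"
  by (simp add: Modules.additive_def)

lemma Aut_id: "id \<in> Aut"
  by (simp add: Aut_iff additive_id)

lemma Aut_comp: "f \<in> Aut \<Longrightarrow> g \<in> Aut \<Longrightarrow> f \<circ> g \<in> Aut"
  by (simp add: Aut_iff additive_comp bij_comp)

lemma Aut_inv: "f \<in> Aut \<Longrightarrow> inv f \<in> Aut"
  by (simp add: Aut_iff additive_inv bij_imp_bij_inv)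

lemma additive_scale_int:
  fixes \<beta> :: "int ^ 'n \<Rightarrow> int"
  assumes "Modules.additive \<beta>"
  shows "\<beta> (k *s x) = k * \<beta> x"
proof (induction k rule: int_induct[where k = 0])
  case base
  show ?case using additive.zero[OF assms] by simp
next
  case (step1 i)
  have "(i + 1) *s x = i *s x + x" by (simp add: vec_eq_iff algebra_simps)
  then show ?case using step1 additive.add[OF assms] by (simp add: algebra_simps)
next
  case (step2 i)
  have "(i - 1) *s x = i *s x - x" by (simp add: vec_eq_iff algebra_simps)
  then show ?case using step2 additive.diff[OF assms] by (simp add: algebra_simps)
qed

lemma additive_vec_scale_int:
  fixes f :: "int ^ 'n \<Rightarrow> int ^ 'm"
  assumes "Modules.additive f"
  shows "f (k *s x) = k *s f x"
proof -
  have "Modules.additive (\<lambda>x. f x $ i)" for i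
    by unfold_locales (simp add: additive.add[OF assms])
  then show ?thesis
    by (simp add: vec_eq_iff additive_scale_int[of "\<lambda>x. f x $ i" for i])
qed

definition qdot :: "rat ^ 'n::finite \<Rightarrow> rat ^ 'n \<Rightarrow> rat" where
  "qdot u v = (\<Sum>i\<in>UNIV. u $ i * v $ i)"

lemma qdot_add [simp]: "qdot u (x + y) = qdot u x + qdot u y"
  by (simp add: qdot_def sum.distrib algebra_simps)

lemma qdot_diff [simp]: "qdot u (x - y) = qdot u x - qdot u y"
  by (simp add: qdot_def sum_subtractf algebra_simps)

lemma qdot_scale [simp]: "qdot u (c *s x) = c * qdot u x"
  by (simp add: qdot_def sum_distrib_left algebra_simps)

lemma qdot_scale_left [simp]: "qdot (c *s u) x = c * qdot u x"
  by (simp add: qdot_def sum_distrib_left algebra_simps)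

lemma qdot_add_left [simp]: "qdot (u + v) x = qdot u x + qdot v x"
  by (simp add: qdot_def sum.distrib algebra_simps)

lemma qdot_diff_left [simp]: "qdot (u - v) x = qdot u x - qdot v x"
  by (simp add: qdot_def sum_subtractf algebra_simps)

lemma qdot_uminus_left [simp]: "qdot (- u) x = - qdot u x"
  by (simp add: qdot_def sum_negf)

lemma qdot_axis [simp]: "qdot u (axis k 1) = u $ k"
  by (simp add: qdot_def axis_def if_distrib cong: if_cong)

lemma qdot_axis_left [simp]: "qdot (axis k 1) u = u $ k"
  using qdot_axis[of u k] by (simp add: qdot_def mult.commute)

lemma matrix_vector_mult_nth_qdot: "(A *v v) $ k = qdot (A $ k) v"
  by (simp add: matrix_vector_mult_def qdot_def)

lemma matrix_vector_mult_scale_rat: "(A :: rat ^ 'n::finite ^ 'm) *v (c *s v) = c *s (A *v v)"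
  by (simp add: vec_eq_iff matrix_vector_mult_def sum_distrib_left algebra_simps)

lemma toQ_nth [simp]: "toQ x $ i = of_int (x $ i)"
  by (simp add: toQ_def)

lemma toQ_add [simp]: "toQ (x + y) = toQ x + toQ y"
  and toQ_diff [simp]: "toQ (x - y) = toQ x - toQ y"
  and toQ_uminus [simp]: "toQ (- x) = - toQ x"
  and toQ_zero [simp]: "toQ 0 = 0"
  and toQ_scale [simp]: "toQ (k *s x) = of_int k *s toQ x"
  and toQ_axis [simp]: "toQ (axis j 1) = axis j 1"
  by (simp_all add: vec_eq_iff axis_def)

lemma toQ_eq_iff: "toQ x = toQ y \<longleftrightarrow> x = y"
  by (simp add: vec_eq_iff)

lemma toQ_sum: "toQ (sum g A) = (\<Sum>a\<in>A. toQ (g a))"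
  by (induction A rule: infinite_finite_induct) auto

definition qform :: "('n::finite) dual \<Rightarrow> rat ^ 'n" where
  "qform \<beta> = (\<chi> j. of_int (\<beta> (axis j 1)))"

lemma additive_expansion:
  fixes f :: "int ^ 'n::finite \<Rightarrow> 'b::ab_group_add"
  assumes "Modules.additive f" and "\<And>k x. f (k *s x) = g k (f x)"
  shows "f x = (\<Sum>j\<in>UNIV. g (x $ j) (f (axis j 1)))"
proof -
  have "f x = f (\<Sum>j\<in>UNIV. x $ j *s axis j 1)"
    by (simp only: basis_expansion)
  also have "\<dots> = (\<Sum>j\<in>UNIV. f (x $ j *s axis j 1))"
    by (rule additive.sum[OF assms(1)])
  finally show ?thesis by (simp only: assms(2))
qed

lemma of_int_additive_eq_qdot:
  assumes "Modules.additive \<beta>"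
  shows "of_int (\<beta> x) = qdot (qform \<beta>) (toQ x)"
  using additive_expansion[where g = "(*)", OF assms additive_scale_int[OF assms], of x]
  by (simp add: qdot_def qform_def mult.commute)

lemma qmat_mult_toQ:
  assumes "Modules.additive f"
  shows "qmat f *v toQ x = toQ (f x)"
proof -
  have "f x = (\<Sum>j\<in>UNIV. x $ j *s f (axis j 1))"
    by (rule additive_expansion[where g = "(*s)", OF assms additive_vec_scale_int[OF assms]])
  then have "f x $ i = (\<Sum>j\<in>UNIV. x $ j * f (axis j 1) $ i)" for i
    by (simp only: sum_component vector_smult_component)
  then show ?thesis
    by (simp add: vec_eq_iff matrix_vector_mult_def qmat_def mult.commute)
qed

lemma qmat_comp:
  assumes "Modules.additive f"
  shows "qmat (f \<circ> g) = qmat f ** qmat g"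
proof -
  have "(qmat f ** qmat g) $ i $ j = qmat (f \<circ> g) $ i $ j" for i j
  proof -
    have column: "(\<chi> k. qmat g $ k $ j) = toQ (g (axis j 1))"
      by (simp add: qmat_def vec_eq_iff)
    have "(qmat f ** qmat g) $ i $ j = (qmat f *v (\<chi> k. qmat g $ k $ j)) $ i"
      by (simp add: matrix_matrix_mult_def matrix_vector_mult_def)
    also have "\<dots> = toQ (f (g (axis j 1))) $ i"
      by (simp only: column qmat_mult_toQ[OF assms])
    finally show ?thesis by (simp add: qmat_def)
  qed
  then show ?thesis by (simp add: vec_eq_iff)
qed

lemma qmat_id: "qmat id = mat 1"
  by (simp add: qmat_def mat_def axis_def vec_eq_iff)

lemma qmat_inject:
  assumes "Modules.additive f" and "Modules.additive g"
  shows "qmat f = qmat g \<longleftrightarrow> f = g"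
proof
  assume "qmat f = qmat g"
  then have "toQ (f x) = toQ (g x)" for x
    by (metis qmat_mult_toQ assms)
  then show "f = g" by (simp add: toQ_eq_iff fun_eq_iff)
qed simp

section \<open>Reflections\<close>

lemma diag_refl_mult: "diag_refl k *v v = v - (2 * v $ k) *s axis k (1::rat)"
proof -
  have "(diag_refl k *v v) $ i = (if i = k then -1 else 1) * v $ i" for i
  proof -
    have "diag_refl k $ i $ j * v $ j = (if j = i then (if i = k then -1 else 1) * v $ j else 0)" for j
      by (simp add: diag_refl_def)
    then show ?thesis
      unfolding matrix_vector_mult_def by (simp only: vec_lambda_beta sum.delta finite UNIV_I if_True)
  qed
  then show ?thesis by (simp add: vec_eq_iff axis_def)
qed

lemma det_diag_refl: "det (diag_refl k) = -1"
proof -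
  have "det (diag_refl k) = (\<Prod>i\<in>UNIV. diag_refl k $ i $ i)"
    by (rule det_diagonal) (simp add: diag_refl_def)
  also have "\<dots> = (\<Prod>i\<in>UNIV. if i = k then -1 else 1)"
    by (simp add: diag_refl_def)
  finally show ?thesis by (simp add: prod.delta)
qed

lemma diag_refl_square: "diag_refl (k::'n::finite) ** diag_refl k = mat 1"
proof (rule matrix_eq[THEN iffD2], rule allI)
  fix v :: "rat ^ 'n"
  have "diag_refl k *v (diag_refl k *v v) = v"
    unfolding diag_refl_mult by (simp add: vec_eq_iff axis_def)
  then show "(diag_refl k ** diag_refl k) *v v = mat 1 *v v"
    by (simp only: matrix_vector_mul_assoc matrix_vector_mul_lid)
qed

lemma reflection_additive: "reflection \<sigma> \<Longrightarrow> Modules.additive \<sigma>"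
  unfolding reflection_def Aut_iff by blast

lemma reflection_qmat_similar:
  fixes \<sigma> :: "('n::finite) lat \<Rightarrow> 'n lat"
  assumes "reflection \<sigma>"
  obtains P Q :: "rat ^ 'n ^ 'n" and k :: 'n
  where "P ** Q = mat 1" and "Q ** P = mat 1" and "qmat \<sigma> = Q ** diag_refl k ** P"
proof -
  obtain P Q :: "rat ^ 'n ^ 'n" and k :: 'n
    where PQ: "P ** Q = mat 1" "Q ** P = mat 1" and diag: "P ** qmat \<sigma> ** Q = diag_refl k"
    using assms unfolding reflection_def by blast
  have "Q ** diag_refl k ** P = (Q ** P) ** qmat \<sigma> ** (Q ** P)"
    by (simp only: diag[symmetric] matrix_mul_assoc)
  also have "\<dots> = qmat \<sigma>"
    by (simp only: PQ matrix_mul_lid matrix_mul_rid)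
  finally show ?thesis using PQ that by metis
qed

lemma reflection_det:
  fixes \<sigma> :: "('n::finite) lat \<Rightarrow> 'n lat"
  assumes "reflection \<sigma>"
  shows "det (qmat \<sigma>) = -1"
proof -
  obtain P Q :: "rat ^ 'n ^ 'n" and k :: 'n where "P ** Q = mat 1" and PQ: "Q ** P = mat 1"
    and \<sigma>: "qmat \<sigma> = Q ** diag_refl k ** P"
    using assms by (rule reflection_qmat_similar)
  have "det Q * det P = 1"
    using PQ det_mul[of Q P] det_I by metis
  then show ?thesis
    by (simp add: \<sigma> det_mul det_diag_refl)
qed

lemma reflection_involutive:
  fixes \<sigma> :: "('n::finite) lat \<Rightarrow> 'n lat"
  assumes "reflection \<sigma>"
  shows "\<sigma> \<circ> \<sigma> = id"
proof -
  obtain P Q :: "rat ^ 'n ^ 'n" and k :: 'n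
    where PQ: "P ** Q = mat 1" "Q ** P = mat 1" and \<sigma>: "qmat \<sigma> = Q ** diag_refl k ** P"
    using assms by (rule reflection_qmat_similar)
  have additive: "Modules.additive \<sigma>"
    using assms by (rule reflection_additive)
  have "qmat (\<sigma> \<circ> \<sigma>) = Q ** diag_refl k ** (P ** Q) ** diag_refl k ** P"
    by (simp only: qmat_comp[OF additive] \<sigma> matrix_mul_assoc)
  also have "\<dots> = Q ** (diag_refl k ** diag_refl k) ** P"
    by (simp only: PQ matrix_mul_rid matrix_mul_assoc)
  also have "\<dots> = mat 1"
    by (simp only: PQ diag_refl_square matrix_mul_rid)
  finally have "qmat (\<sigma> \<circ> \<sigma>) = qmat id"
    by (simp only: qmat_id)
  then show ?thesis
    by (simp only: qmat_inject[OF additive_comp[OF additive additive] additive_id])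
qed

lemma reflection_apply_apply: "reflection \<sigma> \<Longrightarrow> \<sigma> (\<sigma> x) = x"
  using reflection_involutive by (metis comp_apply id_apply)

lemma reflection_neq_id: "reflection \<sigma> \<Longrightarrow> \<sigma> \<noteq> id"
  using reflection_det[of \<sigma>] by (auto simp: qmat_id)

lemma reflection_rational_form:
  fixes \<sigma> :: "('n::finite) lat \<Rightarrow> 'n lat"
  assumes "reflection \<sigma>"
  obtains p q where "qdot p q = -2" and "\<And>x. toQ (\<sigma> x) = toQ x + qdot p (toQ x) *s q"
proof -
  obtain P Q :: "rat ^ 'n ^ 'n" and k :: 'n
    where PQ: "P ** Q = mat 1" "Q ** P = mat 1" and \<sigma>: "qmat \<sigma> = Q ** diag_refl k ** P"
    using assms by (rule reflection_qmat_similar)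
  define q where "q = Q *v axis k 1"
  define p where "p = (-2) *s (P $ k)"
  have "toQ (\<sigma> x) = toQ x + qdot p (toQ x) *s q" for x
  proof -
    have "toQ (\<sigma> x) = Q *v (diag_refl k *v (P *v toQ x))"
      by (simp only: qmat_mult_toQ[OF reflection_additive[OF assms], symmetric] \<sigma>
          matrix_vector_mul_assoc matrix_mul_assoc)
    also have "\<dots> = Q *v (P *v toQ x) - (2 * (P *v toQ x) $ k) *s q"
      by (simp only: diag_refl_mult matrix_vector_mult_diff_distrib matrix_vector_mult_scale_rat q_def)
    also have "\<dots> = toQ x - (2 * (P *v toQ x) $ k) *s q"
      by (simp only: matrix_vector_mul_assoc PQ matrix_vector_mul_lid)
    finally show ?thesis
      by (simp add: p_def matrix_vector_mult_nth_qdot vec_eq_iff)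
  qed
  moreover have "(P *v q) $ k = 1"
    by (simp add: q_def matrix_vector_mul_assoc PQ axis_def)
  then have "qdot p q = -2"
    by (simp add: p_def matrix_vector_mult_nth_qdot)
  ultimately show ?thesis using that by blast
qed

definition outer :: "rat ^ 'n::finite \<Rightarrow> rat ^ 'n \<Rightarrow> rat ^ 'n ^ 'n" where
  "outer u w = (\<chi> i j. u $ i * w $ j)"

lemma axis_nth_rat: "axis k (1::rat) $ i = (if i = k then 1 else 0)"
  by (simp add: axis_def)

lemma outer_mult: "outer u w *v a = qdot w a *s u"
  unfolding outer_def
  by (simp add: matrix_vector_mult_def qdot_def vec_eq_iff sum_distrib_left algebra_simps)

lemma pseudo_reflection_similar_diag_refl:
  fixes \<nu> r :: "rat ^ 'n::finite" and M :: "rat ^ 'n ^ 'n"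
  assumes \<nu>r: "qdot \<nu> r = -2" and rk: "r $ k \<noteq> 0" and M: "\<And>v. M *v v = v + qdot \<nu> v *s r"
  shows "\<exists>P Q. P ** Q = mat 1 \<and> Q ** P = mat 1 \<and> P ** M ** Q = diag_refl k"
proof -
  text \<open>\<open>Q\<close> sends \<open>e\<^sub>k\<close> to \<open>r\<close> and \<open>e\<^sub>j\<close> (\<open>j \<noteq> k\<close>) to \<open>e\<^sub>j + (\<nu>\<^sub>j / 2) r \<in> ker \<nu>\<close>,
    a basis of eigenvectors of \<open>M\<close>; \<open>P\<close> is its inverse.\<close>
  define Q where "Q = mat 1 - outer (axis k 1) (axis k 1)
      + outer r ((1/2) *s \<nu> + (1 - \<nu> $ k / 2) *s axis k 1)"
  define P where "P = mat 1 - outer r ((1 / r $ k) *s axis k 1) - outer (axis k 1) ((1/2) *s \<nu>)"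
  have Q_mult: "Q *v a = a - (a $ k) *s axis k 1 + (qdot \<nu> a / 2 + (1 - \<nu> $ k / 2) * a $ k) *s r" for a
    unfolding Q_def
    by (simp add: matrix_vector_mult_add_rdistrib matrix_vector_mult_diff_rdistrib outer_mult)
      (simp add: vec_eq_iff algebra_simps)
  have P_mult: "P *v v = v - (v $ k / r $ k) *s r - (qdot \<nu> v / 2) *s axis k 1" for v
    unfolding P_def
    by (simp add: matrix_vector_mult_add_rdistrib matrix_vector_mult_diff_rdistrib outer_mult)
  have PQ: "P *v (Q *v a) = a" for a
    unfolding P_mult Q_mult using \<nu>r rk by (auto simp add: vec_eq_iff axis_nth_rat field_simps)
  have QP: "Q *v (P *v a) = a" for a
  proof -
    have "Q *v (P *v a) = (let w = P *v a in w - (w $ k) *s axis k 1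
       + (qdot \<nu> w / 2 + (1 - \<nu> $ k / 2) * w $ k) *s r)"
      by (simp add: Q_mult Let_def)
    also have "\<dots> = a"
      unfolding P_mult Let_def using \<nu>r rk
      by (auto simp add: vec_eq_iff axis_nth_rat field_simps)
    finally show ?thesis .
  qed
  have PMQ: "P *v (M *v (Q *v a)) = diag_refl k *v a" for a
  proof -
    have "P *v (M *v (Q *v a)) = (let w = Q *v a + qdot \<nu> (Q *v a) *s r in
        w - (w $ k / r $ k) *s r - (qdot \<nu> w / 2) *s axis k 1)"
      by (simp add: P_mult M Let_def)
    also have "\<dots> = diag_refl k *v a"
      unfolding Q_mult Let_def diag_refl_mult using \<nu>r rk
      by (auto simp add: vec_eq_iff axis_nth_rat field_simps)
    finally show ?thesis .
  qed
  have "P ** Q = mat 1" and "Q ** P = mat 1" and "P ** M ** Q = diag_refl k"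
    by (rule matrix_eq[THEN iffD2]; simp add: matrix_vector_mul_assoc[symmetric] PQ QP PMQ)+
  then show ?thesis by blast
qed

lemma root_refl_additive:
  assumes "Modules.additive \<beta>"
  shows "Modules.additive (root_refl r \<beta>)"
  by unfold_locales (simp add: root_refl_def additive.add[OF assms] vec_eq_iff algebra_simps)

lemma root_refl_apply_apply:
  assumes "Modules.additive \<beta>" and "\<beta> r = -2"
  shows "root_refl r \<beta> (root_refl r \<beta> x) = x"
  using assms
  by (simp add: root_refl_def additive.add[OF assms(1)] additive_scale_int[OF assms(1)]
      vec_eq_iff algebra_simps)

lemma root_refl_Aut:
  assumes "Modules.additive \<beta>" and "\<beta> r = -2"
  shows "root_refl r \<beta> \<in> Aut"
  unfolding Aut_iff using root_refl_apply_apply[OF assms] root_refl_additive[OF assms(1)]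
  by (metis bij_betw_def inj_def surj_def)

lemma root_refl_reflection:
  assumes "Modules.additive \<beta>" and "\<beta> r = -2"
  shows "reflection (root_refl r \<beta>)"
proof -
  have "r \<noteq> 0" using assms additive.zero by force
  then obtain k where rk: "toQ r $ k \<noteq> 0" by (auto simp: vec_eq_iff)
  have "qmat (root_refl r \<beta>) = mat 1 + outer (toQ r) (qform \<beta>)"
    by (simp add: qmat_def root_refl_def outer_def qform_def mat_def axis_def vec_eq_iff)
  then have "qmat (root_refl r \<beta>) *v v = v + qdot (qform \<beta>) v *s toQ r" for v
    by (simp add: matrix_vector_mult_add_rdistrib outer_mult)
  moreover have "qdot (qform \<beta>) (toQ r) = -2"
    using of_int_additive_eq_qdot[OF assms(1), of r] assms(2) by simp
  ultimately have
    "\<exists>P Q. P ** Q = mat 1 \<and> Q ** P = mat 1 \<and> P ** qmat (root_refl r \<beta>) ** Q = diag_refl k"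
    using pseudo_reflection_similar_diag_refl rk by blast
  then show ?thesis
    unfolding reflection_def using root_refl_Aut[OF assms] by blast
qed

section \<open>Generated groups and transvections\<close>

lemma gen_group_id: "id \<in> gen_group S"
  unfolding gen_group_def by simp

lemma gen_group_base: "s \<in> S \<Longrightarrow> s \<in> gen_group S"
  unfolding gen_group_def by auto

lemma gen_group_comp: "f \<in> gen_group S \<Longrightarrow> g \<in> gen_group S \<Longrightarrow> f \<circ> g \<in> gen_group S"
  unfolding gen_group_def by simp

lemma gen_group_inv: "f \<in> gen_group S \<Longrightarrow> inv f \<in> gen_group S"
  unfolding gen_group_def by simp

lemma gen_group_minimal:
  assumes "id \<in> H" and "S \<subseteq> H" and "\<And>f g. f \<in> H \<Longrightarrow> g \<in> H \<Longrightarrow> f \<circ> g \<in> H"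
    and "\<And>f. f \<in> H \<Longrightarrow> inv f \<in> H"
  shows "gen_group S \<subseteq> H"
  unfolding gen_group_def using assms by (intro Inter_lower) blast

lemma gen_group_mono: "A \<subseteq> B \<Longrightarrow> gen_group A \<subseteq> gen_group B"
  unfolding gen_group_def by (rule Inter_anti_mono) auto

lemma gen_group_induct [consumes 1, case_names id base comp inv]:
  assumes "w \<in> gen_group S"
    and "P id"
    and "\<And>s. s \<in> S \<Longrightarrow> P s"
    and "\<And>f g. f \<in> gen_group S \<Longrightarrow> g \<in> gen_group S \<Longrightarrow> P f \<Longrightarrow> P g \<Longrightarrow> P (f \<circ> g)"
    and "\<And>f. f \<in> gen_group S \<Longrightarrow> P f \<Longrightarrow> P (inv f)"
  shows "P w"
proof -
  have "gen_group S \<subseteq> {f \<in> gen_group S. P f}"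
    using assms(2-) by (intro gen_group_minimal) (auto intro: gen_group_id gen_group_base
        gen_group_comp gen_group_inv)
  then show ?thesis using assms(1) by blast
qed

lemma funpow_in_monoid:
  assumes "id \<in> W" and "\<And>f g. f \<in> W \<Longrightarrow> g \<in> W \<Longrightarrow> f \<circ> g \<in> W" and "g \<in> W"
  shows "g ^^ k \<in> W"
proof (induction k)
  case 0
  then show ?case using assms(1) by (simp only: funpow.simps(1))
next
  case (Suc k)
  then show ?case using assms(2,3) by (simp only: funpow.simps(2))
qed

text \<open>The hypothesis makes \<open>g\<close> a transvection \<open>x \<mapsto> x + \<phi>(x) v\<close> with \<open>\<phi>(v) = 0\<close>; its powers
  \<open>x \<mapsto> x + k \<phi>(x) v\<close> are pairwise distinct unless \<open>g = id\<close>.\<close>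
lemma transvection_finite_order_eq_id:
  fixes g :: "int ^ 'n \<Rightarrow> int ^ 'n"
  assumes additive: "Modules.additive g" and unipotent: "\<And>x. g (g x - x) = g x - x"
    and finite: "finite (range (\<lambda>k. g ^^ k))"
  shows "g = id"
proof (rule ccontr)
  assume "g \<noteq> id"
  then obtain x where "g x \<noteq> x" by (auto simp: fun_eq_iff)
  then obtain i where i: "(g x - x) $ i \<noteq> 0" by (auto simp: vec_eq_iff)
  have powers: "(g ^^ k) x = x + int k *s (g x - x)" for k
  proof (induction k)
    case (Suc k)
    have "(g ^^ Suc k) x = g (x + int k *s (g x - x))"
      by (simp add: Suc)
    also have "\<dots> = g x + int k *s (g x - x)"
      by (simp only: additive.add[OF additive] additive_vec_scale_int[OF additive] unipotent)
    finally show ?case by (simp add: vec_eq_iff algebra_simps)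
  qed (simp add: vec_eq_iff)
  have "inj (\<lambda>k. g ^^ k)"
  proof (rule injI)
    fix k l assume "g ^^ k = g ^^ l"
    then have "(x + int k *s (g x - x)) $ i = (x + int l *s (g x - x)) $ i"
      by (metis powers)
    then have "int k * (g x - x) $ i = int l * (g x - x) $ i"
      by (simp only: vector_add_component vector_smult_component)
    then show "k = l" using i by (metis mult_cancel_right of_nat_eq_iff)
  qed
  then show False using finite finite_imageD by (metis infinite_UNIV_nat)
qed

lemma exists_nonzero_on_all:
  fixes N :: "'a \<Rightarrow> ('n::finite) dual"
  assumes "finite A" and "0 \<in> F" and add: "\<And>x y. x \<in> F \<Longrightarrow> y \<in> F \<Longrightarrow> x + y \<in> F"
    and scale: "\<And>x c. x \<in> F \<Longrightarrow> c *s x \<in> F"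
    and additive: "\<And>a. a \<in> A \<Longrightarrow> Modules.additive (N a)"
    and nonzero: "\<And>a. a \<in> A \<Longrightarrow> \<exists>y\<in>F. N a y \<noteq> 0"
  shows "\<exists>x\<in>F. \<forall>a\<in>A. N a x \<noteq> 0"
  using assms(1) additive nonzero
proof (induction A rule: finite_induct)
  case empty
  then show ?case using \<open>0 \<in> F\<close> by blast
next
  case (insert a A)
  then obtain x where x: "x \<in> F" "\<forall>a'\<in>A. N a' x \<noteq> 0" by blast
  obtain y where y: "y \<in> F" "N a y \<noteq> 0" using insert.prems by blast
  show ?case
  proof (cases "N a x = 0")
    case False
    then show ?thesis using x by blast
  next
    case True
    text \<open>Perturb \<open>y\<close> by a multiple of \<open>x\<close> large enough to dominate every \<open>N a' y\<close>.\<close>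
    define C where "C = 1 + (\<Sum>a'\<in>A. \<bar>N a' y\<bar>)"
    define z where "z = C *s x + y"
    have "N a' z \<noteq> 0" if "a' \<in> A" for a'
    proof -
      have hom: "Modules.additive (N a')" using insert.prems that by blast
      have "\<bar>N a' y\<bar> \<le> (\<Sum>a'\<in>A. \<bar>N a' y\<bar>)"
        by (intro member_le_sum) (auto simp: that insert.hyps(1))
      then have "\<bar>N a' y\<bar> < C" unfolding C_def by simp
      moreover have "C \<le> \<bar>C * N a' x\<bar>"
      proof -
        have "1 \<le> \<bar>N a' x\<bar>" using x that by auto
        then have "C * 1 \<le> C * \<bar>N a' x\<bar>"
          using \<open>\<bar>N a' y\<bar> < C\<close> by (intro mult_left_mono) auto
        then show ?thesis using \<open>\<bar>N a' y\<bar> < C\<close> by (simp add: abs_mult)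
      qed
      ultimately show ?thesis
        unfolding z_def by (simp add: additive.add[OF hom] additive_scale_int[OF hom])
    qed
    moreover have "N a z \<noteq> 0"
    proof -
      have hom: "Modules.additive (N a)" using insert.prems by blast
      show ?thesis
        using True y unfolding z_def by (simp add: additive.add[OF hom] additive_scale_int[OF hom])
    qed
    ultimately show ?thesis using add scale x y unfolding z_def by blast
  qed
qed

lemma prod_involution_eq_1:
  fixes g :: "'a \<Rightarrow> 'b::comm_monoid_mult"
  assumes g_h: "\<And>x. x \<in> X \<Longrightarrow> g (h x) * g x = 1"
    and h: "\<And>x. x \<in> X \<Longrightarrow> h x \<in> X" "\<And>x. x \<in> X \<Longrightarrow> h (h x) = x" "\<And>x. x \<in> X \<Longrightarrow> h x \<noteq> x"
  shows "(\<Prod>x\<in>X. g x) = 1"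
proof (cases "finite X")
  case True
  define R where "R = {(x, y). x \<in> X \<and> y \<in> X \<and> (x = y \<or> h x = y)}"
  have R: "equiv X R"
    unfolding equiv_def R_def using h(2) by (auto simp: refl_on_def sym_def trans_def)
  have "(\<Prod>x\<in>X. g x) = (\<Prod>B\<in>X // R. \<Prod>x\<in>B. g x)"
    by (rule prod.partition[OF True partition_on_quotient[OF R]])
  also have "\<dots> = (\<Prod>B\<in>X // R. 1)"
  proof (rule prod.cong)
    fix B assume "B \<in> X // R"
    then obtain x where x: "x \<in> X" and B: "B = R `` {x}"
      by (metis quotientE)
    have "R `` {x} = {x, h x}"
      using h x by (auto simp: R_def)
    then show "(\<Prod>x\<in>B. g x) = 1"
      using h(3)[OF x] g_h[OF x] by (simp add: B mult.commute)
  qed simp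
  finally show ?thesis by simp
qed simp

lemma additive_eq_if_eq_on_spanning:
  fixes f g :: "('n::finite) lat \<Rightarrow> 'n lat"
  assumes af: "Modules.additive f" and ag: "Modules.additive g"
    and eq: "\<And>x. x \<in> S \<Longrightarrow> f x = g x" and span: "vec.span (toQ ` S) = UNIV"
  shows "f = g"
proof -
  text \<open>Every rational vector has a nonzero integral multiple on which \<open>f\<close> and \<open>g\<close> agree.\<close>
  define D where "D = {v. \<exists>m::int. m \<noteq> 0 \<and> (\<exists>z. f z = g z \<and> toQ z = of_int m *s v)}"
  have D_span: "v \<in> D" if "v \<in> vec.span (toQ ` S)" for v
    using that
  proof (induction rule: vec.span_induct_alt)
    case base
    show ?case unfolding D_def
      by (rule CollectI, rule exI[of _ 1], simp, rule exI[of _ 0])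
        (simp add: additive.zero[OF af] additive.zero[OF ag])
  next
    case (step c x y)
    obtain s where s: "s \<in> S" "x = toQ s" using step.hyps by blast
    obtain m z where mz: "m \<noteq> 0" "f z = g z" "toQ z = of_int m *s y"
      using step.IH unfolding D_def by blast
    obtain a b where ab: "c = of_int a / of_int b" "b > 0"
      by (cases c) (auto simp: Fract_of_int_quotient)
    define z' where "z' = (a * m) *s s + b *s z"
    have "f z' = g z'" unfolding z'_def
      by (simp add: additive.add[OF af] additive.add[OF ag] additive_vec_scale_int[OF af]
          additive_vec_scale_int[OF ag] mz(2) eq[OF s(1)])
    moreover have "toQ z' = of_int (b * m) *s (c *s x + y)"
      unfolding z'_def using ab(2) by (simp add: s(2) mz(3) ab(1) vec_eq_iff field_simps)
    moreover have "b * m \<noteq> 0" using mz(1) ab(2) by simp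
    ultimately show ?case unfolding D_def by blast
  qed
  have "toQ x \<in> D" for x
    using D_span by (simp add: span)
  show ?thesis
  proof
    fix x
    obtain m z where mz: "m \<noteq> 0" "f z = g z" "toQ z = of_int m *s toQ x"
      using \<open>toQ x \<in> D\<close> unfolding D_def by blast
    have "z = m *s x" using mz(3) by (simp add: toQ_eq_iff[symmetric])
    then have "m *s f x = m *s g x"
      using mz(2) by (simp add: additive_vec_scale_int[OF af] additive_vec_scale_int[OF ag])
    then show "f x = g x" using mz(1) by (simp add: vec_eq_iff)
  qed
qed

section \<open>From root systems to marked reflection structures\<close>

lemma pm_uminus: "pm (- b) (\<lambda>x. - \<beta> x) = pm b \<beta>"
  unfolding pm_def by auto

locale root_sys =
  fixes R :: "('n::finite) lat set" and n :: "'n lat \<Rightarrow> 'n dual"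
  assumes root_system: "root_system R n"
begin

definition s :: "'n lat \<Rightarrow> 'n lat \<Rightarrow> 'n lat" where
  "s r = root_refl r (n r)"

definition W :: "('n lat \<Rightarrow> 'n lat) set" where
  "W = gen_group (s ` R)"

definition K :: "'n lat set" where
  "K = (\<Inter>r\<in>R. {x. n r x = 0})"

lemma finite_R: "finite R"
  and additive_n: "r \<in> R \<Longrightarrow> Modules.additive (n r)"
  and n_notin: "r \<notin> R \<Longrightarrow> n r = (\<lambda>_. 0)"
  and span_R_K: "vec.span (toQ ` (R \<union> K)) = UNIV"
  and n_self: "r \<in> R \<Longrightarrow> n r r = -2"
  and multiple_in_R: "r \<in> R \<Longrightarrow> k *s r \<in> R \<Longrightarrow> k = 1 \<or> k = -1"
  and s_root_in_R: "r \<in> R \<Longrightarrow> t \<in> R \<Longrightarrow> t + n r t *s r \<in> R"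
  using root_system unfolding root_system_def K_def hom_Z_iff_additive by blast+

lemma s_apply: "s r x = x + n r x *s r"
  by (simp add: s_def root_refl_def)

lemma s_additive: "r \<in> R \<Longrightarrow> Modules.additive (s r)"
  unfolding s_def by (rule root_refl_additive[OF additive_n])

lemma s_apply_apply: "r \<in> R \<Longrightarrow> s r (s r x) = x"
  unfolding s_def by (rule root_refl_apply_apply[OF additive_n n_self])

lemma s_inv: "r \<in> R \<Longrightarrow> inv (s r) = s r"
  by (rule inv_equality) (simp_all add: s_apply_apply)

lemma s_Aut: "r \<in> R \<Longrightarrow> s r \<in> Aut"
  unfolding s_def by (rule root_refl_Aut[OF additive_n n_self])

lemma s_reflection: "r \<in> R \<Longrightarrow> reflection (s r)"
  unfolding s_def by (rule root_refl_reflection[OF additive_n n_self])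

lemma root_neq_0: "r \<in> R \<Longrightarrow> r \<noteq> 0"
  using n_self additive.zero[OF additive_n] by fastforce

lemma s_in_R: "r \<in> R \<Longrightarrow> t \<in> R \<Longrightarrow> s r t \<in> R"
  using s_root_in_R by (simp add: s_apply)

lemma s_self: "r \<in> R \<Longrightarrow> s r r = - r"
  using n_self by (simp add: s_apply vec_eq_iff)

lemma uminus_in_R: "r \<in> R \<Longrightarrow> - r \<in> R"
  using s_in_R[of r r] s_self[of r] by simp

lemma s_fixes_K: "x \<in> K \<Longrightarrow> r \<in> R \<Longrightarrow> s r x = x"
  unfolding K_def by (simp add: s_apply)

lemma s_image_R:
  assumes "r \<in> R"
  shows "s r ` R = R"
proof
  show "s r ` R \<subseteq> R" using s_in_R[OF assms] by blast
  show "R \<subseteq> s r ` R"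
  proof
    fix t assume "t \<in> R"
    then show "t \<in> s r ` R" using s_apply_apply[OF assms, of t] s_in_R[OF assms] by (metis imageI)
  qed
qed

lemma W_id: "id \<in> W"
  and W_comp: "f \<in> W \<Longrightarrow> g \<in> W \<Longrightarrow> f \<circ> g \<in> W"
  and W_inv: "f \<in> W \<Longrightarrow> inv f \<in> W"
  and s_in_W: "r \<in> R \<Longrightarrow> s r \<in> W"
  unfolding W_def by (simp_all add: gen_group_id gen_group_comp gen_group_inv gen_group_base)

lemma W_subset_stabiliser: "W \<subseteq> {f \<in> Aut. f ` R = R \<and> (\<forall>x\<in>K. f x = x)}" (is "_ \<subseteq> ?H")
  unfolding W_def
proof (rule gen_group_minimal)
  fix f g assume "f \<in> ?H" and "g \<in> ?H"
  moreover from this have "(f \<circ> g) ` R = R"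
    by (simp only: image_comp[symmetric] mem_Collect_eq)
  ultimately show "f \<circ> g \<in> ?H"
    by (simp add: Aut_comp)
next
  fix f assume "f \<in> ?H"
  then have f: "f \<in> Aut" and fR: "f ` R = R" and fK: "\<forall>x\<in>K. f x = x" by auto
  have "bij f" using f by (simp add: Aut_iff)
  then have "inv f ` R = R" and "\<forall>x\<in>K. inv f x = x"
    using fR fK by (metis bij_is_inj image_inv_f_f, metis bij_is_inj inv_f_f)
  then show "inv f \<in> ?H"
    using Aut_inv[OF f] by blast
qed (auto simp: Aut_id s_Aut s_image_R s_fixes_K s_in_R)

lemma W_Aut: "f \<in> W \<Longrightarrow> f \<in> Aut"
  and W_root: "f \<in> W \<Longrightarrow> r \<in> R \<Longrightarrow> f r \<in> R"
  and W_fixes_K: "f \<in> W \<Longrightarrow> x \<in> K \<Longrightarrow> f x = x"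
  using W_subset_stabiliser by blast+

lemma W_additive: "f \<in> W \<Longrightarrow> Modules.additive f"
  and W_bij: "f \<in> W \<Longrightarrow> bij f"
  using W_Aut by (simp_all add: Aut_iff)

lemma W_apply_inv: "f \<in> W \<Longrightarrow> f (inv f x) = x"
  and W_inv_apply: "f \<in> W \<Longrightarrow> inv f (f x) = x"
  using W_bij by (simp_all add: bij_is_inj bij_is_surj surj_f_inv_f)

lemma W_uminus: "f \<in> W \<Longrightarrow> f (- x) = - f x"
  using W_additive additive.minus by blast

lemma finite_W: "finite W"
proof -
  have "inj_on (\<lambda>w. restrict w R) W"
  proof (rule inj_onI)
    fix f g assume f: "f \<in> W" and g: "g \<in> W" and eq: "restrict f R = restrict g R"
    have "f x = g x" if "x \<in> R \<union> K" for x
    proof (cases "x \<in> R")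
      case True
      then show ?thesis using eq by (metis restrict_apply')
    next
      case False
      then show ?thesis using that W_fixes_K[OF f] W_fixes_K[OF g] by simp
    qed
    then show "f = g"
      using additive_eq_if_eq_on_spanning[OF W_additive[OF f] W_additive[OF g] _ span_R_K] by blast
  qed
  moreover have "(\<lambda>w. restrict w R) ` W \<subseteq> (\<Pi>\<^sub>E i\<in>R. R)"
    using W_root by auto
  moreover have "finite (\<Pi>\<^sub>E i\<in>R. R)"
    using finite_R by (simp add: finite_PiE)
  ultimately show ?thesis by (metis finite_imageD finite_subset)
qed

lemma finite_powers_W: "g \<in> W \<Longrightarrow> finite (range (\<lambda>k. g ^^ k))"
  using finite_W funpow_in_monoid[OF W_id W_comp] by (metis finite_subset image_subsetI)

text \<open>\<open>s\<^bsub>w r\<^esub> \<circ> w s\<^sub>r w\<^sup>-\<^sup>1\<close> is a transvection along \<open>w r\<close> lying in the finite group \<open>W\<close>.\<close>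
lemma n_W_apply:
  assumes w: "w \<in> W" and r: "r \<in> R"
  shows "n (w r) x = n r (inv w x)"
proof -
  define t where "t = w r"
  have t: "t \<in> R" unfolding t_def using W_root[OF w r] .
  have aw: "Modules.additive w" and aiw: "Modules.additive (inv w)"
    using W_additive w W_inv by auto
  have iwt: "inv w t = r" unfolding t_def using W_inv_apply[OF w] .
  define g where "g = s t \<circ> (w \<circ> s r \<circ> inv w)"
  have conj: "(w \<circ> s r \<circ> inv w) y = y + n r (inv w y) *s t" for y
    by (simp add: s_apply additive.add[OF aw] additive_vec_scale_int[OF aw] W_apply_inv[OF w] t_def)
  have g_apply: "g y = y + (n t y - n r (inv w y)) *s t" for y
  proof -
    have "g y = s t (y + n r (inv w y) *s t)"
      by (simp only: g_def comp_apply[of "s t"] conj)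
    then show ?thesis
      by (simp add: s_apply additive.add[OF additive_n[OF t]] additive_scale_int[OF additive_n[OF t]]
          n_self[OF t] vec_eq_iff algebra_simps)
  qed
  have "g (g y - y) = g y - y" for y
  proof -
    define d where "d = n t y - n r (inv w y)"
    have "n t (d *s t) = -2 * d" and "n r (inv w (d *s t)) = -2 * d"
      using n_self[OF t] n_self[OF r]
      by (simp_all add: additive_scale_int[OF additive_n[OF t]] additive_scale_int[OF additive_n[OF r]]
          additive_vec_scale_int[OF aiw] iwt)
    then show ?thesis using g_apply[of "d *s t"] by (simp add: g_apply d_def)
  qed
  moreover have "g \<in> W"
    unfolding g_def using W_comp W_inv s_in_W w r t by simp
  moreover have "Modules.additive g"
    unfolding g_def using s_additive t r aw aiw by (simp add: additive_comp)
  ultimately have "g = id"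
    using transvection_finite_order_eq_id finite_powers_W by blast
  then have "(n t x - n r (inv w x)) *s t = 0"
    using g_apply[of x] by (metis add_cancel_left_right id_apply)
  then show ?thesis
    using root_neq_0[OF t] unfolding t_def[symmetric] by (auto simp: vec_eq_iff)
qed

lemma s_W_conj:
  assumes w: "w \<in> W" and r: "r \<in> R"
  shows "w \<circ> s r \<circ> inv w = s (w r)"
  by (auto simp: s_apply additive.add[OF W_additive[OF w]] additive_vec_scale_int[OF W_additive[OF w]]
      W_apply_inv[OF w] n_W_apply[OF w r])

lemma n_uminus: assumes r: "r \<in> R" shows "n (- r) = (\<lambda>x. - n r x)"
proof
  fix x
  have "n (- r) x = n (s r r) x" by (simp add: s_self[OF r])
  also have "\<dots> = n r (s r x)" using n_W_apply[OF s_in_W[OF r] r] s_inv[OF r] by simp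
  also have "\<dots> = - n r x"
    by (simp add: s_apply additive.add[OF additive_n[OF r]] additive_scale_int[OF additive_n[OF r]]
        n_self[OF r])
  finally show "n (- r) x = - n r x" .
qed

lemma s_uminus: "r \<in> R \<Longrightarrow> s (- r) = s r"
  by (rule ext) (simp add: s_apply n_uminus vec_eq_iff)

text \<open>Applying \<open>n\<^sub>p\<close> to \<open>2 p = c r\<close> gives \<open>c d = 4\<close>; then (R3) leaves only \<open>c = \<plusminus>2\<close>.\<close>
lemma double_root_multiple:
  assumes p: "p \<in> R" and r: "r \<in> R" and eq: "2 *s p = c *s r" and cd: "c * d = (4::int)"
  shows "p = r \<or> p = - r"
proof (cases "even c")
  case True
  then obtain e where "c = 2 * e" by blast
  then have "p = e *s r" using eq by (auto simp: vec_eq_iff)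
  moreover from this have "e = 1 \<or> e = -1" using multiple_in_R[OF r, of e] p by blast
  ultimately show ?thesis by (auto simp: vec_eq_iff)
next
  case False
  have "even (c * d)" using cd by simp
  then obtain d' where "d = 2 * d'" using False by (auto simp: even_mult_iff elim: evenE)
  then have "even (c * d')" using cd by simp
  then obtain d'' where "d' = 2 * d''" using False by (auto simp: even_mult_iff elim: evenE)
  then have "c * d'' = 1" using cd \<open>d = 2 * d'\<close> by simp
  then have "c = 1 \<or> c = -1" by (auto simp: zmult_eq_1_iff)
  then have "r = (2 * c) *s p" using eq by (auto simp: vec_eq_iff)
  then have "2 * c = 1 \<or> 2 * c = -1" using multiple_in_R[OF p, of "2 * c"] r by blast
  then have False by presburger
  then show ?thesis ..
qed

lemma s_apply_eq_uminus:
  assumes r: "r \<in> R" and p: "p \<in> R" and eq: "s r p = - p"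
  shows "p = r \<or> p = - r"
proof -
  have double: "2 *s p = (- n r p) *s r"
    using eq by (simp add: s_apply vec_eq_iff) (metis add_eq_0_iff2)
  have "(- n r p) * (- n p r) = 4"
    using arg_cong[OF double, of "n p"] n_self[OF p]
    by (simp add: additive_scale_int[OF additive_n[OF p]])
  then show ?thesis by (rule double_root_multiple[OF p r double])
qed

lemma s_eq_s:
  assumes r: "r \<in> R" and t: "t \<in> R" and eq: "s r = s t"
  shows "t = r \<or> t = - r"
proof -
  have "s r t = - t" using eq s_self[OF t] by simp
  then show ?thesis using s_apply_eq_uminus[OF r t] by blast
qed


section \<open>Regular elements and the sign character\<close>

definition regular :: "'n lat \<Rightarrow> bool" where
  "regular x \<longleftrightarrow> (\<forall>p\<in>R. n p x \<noteq> 0)"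

definition pos_roots :: "'n lat \<Rightarrow> 'n lat set" where
  "pos_roots x = {p \<in> R. n p x < 0}"

definition pos_part :: "'n lat \<Rightarrow> 'n lat \<Rightarrow> 'n lat" where
  "pos_part x y = (if y \<in> pos_roots x then y else - y)"

definition root_sign :: "'n lat \<Rightarrow> 'n lat \<Rightarrow> int" where
  "root_sign x y = (if y \<in> pos_roots x then 1 else -1)"

text \<open>For regular \<open>x\<close>, \<open>sign_char x w\<close> is \<open>(-1)\<close> to the number of positive roots sent to negative
  ones by \<open>w\<close>. It is multiplicative on \<open>W\<close> and \<open>-1\<close> on every \<open>s r\<close>, so it agrees with the
  determinant; but it is \<open>1\<close> on every \<open>w\<close> fixing \<open>x\<close>.\<close>
definition sign_char :: "'n lat \<Rightarrow> ('n lat \<Rightarrow> 'n lat) \<Rightarrow> int" where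
  "sign_char x w = (\<Prod>p\<in>pos_roots x. root_sign x (w p))"

lemma finite_pos_roots: "finite (pos_roots x)"
  unfolding pos_roots_def using finite_R by simp

lemma pos_roots_subset: "p \<in> pos_roots x \<Longrightarrow> p \<in> R"
  unfolding pos_roots_def by simp

lemma uminus_in_pos_roots_iff:
  assumes "regular x" and "y \<in> R"
  shows "- y \<in> pos_roots x \<longleftrightarrow> y \<notin> pos_roots x"
  using assms uminus_in_R[OF assms(2)]
  unfolding regular_def pos_roots_def by (auto simp: n_uminus[OF assms(2)])

lemma root_sign_uminus:
  assumes "regular x" and "y \<in> R"
  shows "root_sign x (- y) = - root_sign x y"
  using uminus_in_pos_roots_iff[OF assms] unfolding root_sign_def by auto

lemma pos_part_in_pos_roots:
  assumes "regular x" and "y \<in> R"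
  shows "pos_part x y \<in> pos_roots x"
  using uminus_in_pos_roots_iff[OF assms] unfolding pos_part_def by auto

lemma root_sign_square: "root_sign x y * root_sign x y = 1"
  unfolding root_sign_def by auto

lemma root_sign_W_apply:
  assumes x: "regular x" and u: "u \<in> W" and y: "y \<in> R"
  shows "root_sign x (u y) = root_sign x y * root_sign x (u (pos_part x y))"
proof (cases "y \<in> pos_roots x")
  case True
  then show ?thesis unfolding pos_part_def root_sign_def by simp
next
  case False
  then have "root_sign x (u (pos_part x y)) = - root_sign x (u y)"
    using root_sign_uminus[OF x W_root[OF u y]] unfolding pos_part_def by (simp add: W_uminus[OF u])
  then show ?thesis using False unfolding root_sign_def by simp
qed

lemma pos_part_W_bij:
  assumes x: "regular x" and w: "w \<in> W"
  shows "bij_betw (\<lambda>p. pos_part x (w p)) (pos_roots x) (pos_roots x)"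
proof -
  have maps: "(\<lambda>p. pos_part x (w p)) ` pos_roots x \<subseteq> pos_roots x"
    using pos_part_in_pos_roots[OF x] W_root[OF w] pos_roots_subset by blast
  have "inj_on (\<lambda>p. pos_part x (w p)) (pos_roots x)"
  proof (rule inj_onI)
    fix p q assume p: "p \<in> pos_roots x" and q: "q \<in> pos_roots x"
      and eq: "pos_part x (w p) = pos_part x (w q)"
    then have "w p = w q \<or> w p = - w q"
      unfolding pos_part_def by (metis minus_minus)
    then have "p = q \<or> p = - q"
      using bij_is_inj[OF W_bij[OF w]] W_uminus[OF w] by (metis injD)
    then show "p = q"
      using uminus_in_pos_roots_iff[OF x pos_roots_subset[OF q]] p q by auto
  qed
  then show ?thesis
    unfolding bij_betw_def using endo_inj_surj[OF finite_pos_roots maps] by blast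
qed

lemma sign_char_comp:
  assumes x: "regular x" and u: "u \<in> W" and w: "w \<in> W"
  shows "sign_char x (u \<circ> w) = sign_char x u * sign_char x w"
proof -
  have "sign_char x (u \<circ> w) = (\<Prod>p\<in>pos_roots x. root_sign x (w p) * root_sign x (u (pos_part x (w p))))"
    unfolding sign_char_def using root_sign_W_apply[OF x u] W_root[OF w] pos_roots_subset
    by (intro prod.cong) auto
  also have "\<dots> = sign_char x w * (\<Prod>p\<in>pos_roots x. root_sign x (u (pos_part x (w p))))"
    unfolding sign_char_def by (simp add: prod.distrib)
  also have "(\<Prod>p\<in>pos_roots x. root_sign x (u (pos_part x (w p)))) = sign_char x u"
    unfolding sign_char_def
    using prod.reindex_bij_betw[OF pos_part_W_bij[OF x w], of "\<lambda>q. root_sign x (u q)"] by simp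
  finally show ?thesis by (simp add: mult.commute comp_def)
qed

lemma sign_char_id: "sign_char x id = 1"
  unfolding sign_char_def root_sign_def by simp

text \<open>\<open>p \<mapsto> pos_part x (s r p)\<close> is an involution of the positive roots preserving the sign of
  \<open>s r p\<close>; its only fixed point with sign \<open>-1\<close> is \<open>pos_part x r\<close>.\<close>
lemma pos_part_s_involution:
  assumes x: "regular x" and r: "r \<in> R" and p: "p \<in> pos_roots x"
  shows "pos_part x (s r (pos_part x (s r p))) = p"
    and "root_sign x (s r (pos_part x (s r p))) = root_sign x (s r p)"
proof -
  have "s r (- s r p) = - p"
    using W_uminus[OF s_in_W[OF r]] s_apply_apply[OF r] by metis
  moreover have "- p \<notin> pos_roots x"
    using uminus_in_pos_roots_iff[OF x pos_roots_subset[OF p]] p by simp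
  ultimately show "pos_part x (s r (pos_part x (s r p))) = p"
    and "root_sign x (s r (pos_part x (s r p))) = root_sign x (s r p)"
    using p unfolding pos_part_def root_sign_def by (auto simp: s_apply_apply[OF r])
qed

lemma root_sign_s_fixed_point:
  assumes x: "regular x" and r: "r \<in> R" and p: "p \<in> pos_roots x" and fixed: "pos_part x (s r p) = p"
  shows "root_sign x (s r p) = (if p = pos_part x r then -1 else 1)"
proof (cases "s r p = - p")
  case True
  have pR: "p \<in> R" using pos_roots_subset[OF p] .
  then have "p = r \<or> p = - r" using s_apply_eq_uminus[OF r pR True] by blast
  then have "p = pos_part x r"
    using p uminus_in_pos_roots_iff[OF x r] unfolding pos_part_def by auto
  moreover have "- p \<notin> pos_roots x" using uminus_in_pos_roots_iff[OF x pR] p by simp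
  ultimately show ?thesis unfolding root_sign_def using True by simp
next
  case False
  then have "s r p = p"
    using fixed unfolding pos_part_def by (auto split: if_splits simp: minus_equation_iff)
  moreover have "p \<noteq> pos_part x r"
  proof
    assume "p = pos_part x r"
    then have "p = r \<or> p = - r" unfolding pos_part_def by (auto split: if_splits)
    then have "s r p = - p"
      using s_self[OF r] s_uminus[OF r] W_uminus[OF s_in_W[OF r]] by auto
    with False show False by simp
  qed
  ultimately show ?thesis unfolding root_sign_def using p by simp
qed

lemma sign_char_s:
  assumes x: "regular x" and r: "r \<in> R"
  shows "sign_char x (s r) = -1"
proof -
  define f where "f p = pos_part x (s r p)" for p
  define g where "g p = root_sign x (s r p)" for p
  let ?F = "{p \<in> pos_roots x. f p = p}"
  have f_in: "f p \<in> pos_roots x" if "p \<in> pos_roots x" for p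
    unfolding f_def using pos_part_in_pos_roots[OF x s_in_R[OF r pos_roots_subset[OF that]]] .
  have "(\<Prod>p\<in>pos_roots x - ?F. g p) = 1"
    using pos_part_s_involution[OF x r] f_in root_sign_square
    by (intro prod_involution_eq_1[where h = f]) (auto simp: f_def g_def)
  then have "sign_char x (s r) = (\<Prod>p\<in>?F. g p)"
    unfolding sign_char_def g_def[symmetric]
    using prod.subset_diff[of ?F "pos_roots x" g] finite_pos_roots by auto
  also have "\<dots> = (\<Prod>p\<in>?F. if p = pos_part x r then -1 else 1)"
    using root_sign_s_fixed_point[OF x r] by (intro prod.cong) (auto simp: f_def g_def)
  also have "\<dots> = -1"
  proof -
    have "s r (pos_part x r) = - pos_part x r"
      unfolding pos_part_def using s_self[OF r] s_uminus[OF r] W_uminus[OF s_in_W[OF r]] by auto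
    moreover have "pos_part x r \<in> pos_roots x" using pos_part_in_pos_roots[OF x r] .
    ultimately have "pos_part x r \<in> ?F"
      using uminus_in_pos_roots_iff[OF x r] unfolding f_def pos_part_def by auto
    then show ?thesis using finite_pos_roots by (simp add: prod.delta')
  qed
  finally show ?thesis .
qed

lemma det_qmat_eq_sign_char:
  assumes x: "regular x" and w: "w \<in> W"
  shows "det (qmat w) = of_int (sign_char x w)"
  using w unfolding W_def
proof (induction rule: gen_group_induct)
  case id
  then show ?case by (simp only: sign_char_id qmat_id det_I of_int_1)
next
  case (base f)
  then obtain r where "r \<in> R" "f = s r" by blast
  then show ?case using sign_char_s[OF x] reflection_det[OF s_reflection] by simp
next
  case (comp f g)
  then have "f \<in> W" and "g \<in> W" unfolding W_def by auto
  with comp.IH show ?case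
    by (simp only: sign_char_comp[OF x] qmat_comp[OF W_additive] det_mul of_int_mult)
next
  case (inv f)
  then have f: "f \<in> W" unfolding W_def by auto
  have "inv f \<circ> f = id" using W_bij[OF f] by (simp add: bij_is_inj)
  then have sign: "sign_char x (inv f) * sign_char x f = 1"
    using sign_char_comp[OF x W_inv[OF f] f] sign_char_id by simp
  have det: "det (qmat (inv f)) * det (qmat f) = 1"
    using \<open>inv f \<circ> f = id\<close> qmat_comp[OF W_additive[OF W_inv[OF f]], of f] qmat_id det_mul det_I
    by metis
  have "of_int (sign_char x (inv f)) * det (qmat f) = of_int (sign_char x (inv f) * sign_char x f)"
    using inv.IH by simp
  also have "\<dots> = det (qmat (inv f)) * det (qmat f)"
    by (simp only: sign det of_int_1)
  finally have "of_int (sign_char x (inv f)) * det (qmat f) = det (qmat (inv f)) * det (qmat f)" .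
  moreover have "det (qmat f) \<noteq> 0" using det by auto
  ultimately show ?case by simp
qed

lemma sign_char_fixing:
  assumes x: "regular x" and w: "w \<in> W" and fixed: "w x = x"
  shows "sign_char x w = 1"
  unfolding sign_char_def
proof (rule prod.neutral, rule ballI)
  fix p assume p: "p \<in> pos_roots x"
  have "n (w p) x = n p x"
    using n_W_apply[OF w pos_roots_subset[OF p]] W_inv_apply[OF w, of x] fixed by simp
  then have "w p \<in> pos_roots x"
    using p W_root[OF w pos_roots_subset[OF p]] unfolding pos_roots_def by simp
  then show "root_sign x (w p) = 1" unfolding root_sign_def by simp
qed


lemma n_proportional_to_reflection_form:
  assumes t: "reflection t" and r: "r \<in> R" and fixed: "\<And>y. t y = y \<Longrightarrow> n r y = 0"
    and t_form: "\<And>y. toQ (t y) = toQ y + qdot p (toQ y) *s q"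
  shows "of_int (n r y) = - qdot (qform (n r)) q / 2 * qdot p (toQ y)"
proof -
  have nr: "Modules.additive (n r)" using additive_n[OF r] .
  have "t (y + t y) = y + t y"
    by (simp add: additive.add[OF reflection_additive[OF t]] reflection_apply_apply[OF t] add.commute)
  then have "n r (y + t y) = 0" using fixed by blast
  then have "n r (t y) = - n r y"
    by (simp add: additive.add[OF nr] eq_neg_iff_add_eq_0 add.commute)
  then have "- qdot (qform (n r)) (toQ y)
      = qdot (qform (n r)) (toQ y) + qdot p (toQ y) * qdot (qform (n r)) q"
    using of_int_additive_eq_qdot[OF nr, of y] of_int_additive_eq_qdot[OF nr, of "t y"] t_form[of y]
    by simp
  then show ?thesis
    using of_int_additive_eq_qdot[OF nr, of y] by (simp add: field_simps)
qed

text \<open>If \<open>n\<^sub>r\<close> kills the fixed lattice of \<open>t\<close>, then \<open>t \<circ> s\<^sub>r\<close> is a transvection in \<open>W\<close>.\<close>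
lemma reflection_eq_s_if_n_vanishes_on_fixed:
  assumes tW: "t \<in> W" and t: "reflection t" and r: "r \<in> R"
    and fixed: "\<And>y. t y = y \<Longrightarrow> n r y = 0"
  shows "t = s r"
proof -
  obtain p q where pq: "qdot p q = -2" and t_form: "\<And>y. toQ (t y) = toQ y + qdot p (toQ y) *s q"
    using reflection_rational_form[OF t] by blast
  define \<phi> where "\<phi> y = qdot p (toQ y)" for y
  define c where "c = - qdot (qform (n r)) q / 2"
  have n_eq: "of_int (n r y) = c * \<phi> y" for y
    unfolding c_def \<phi>_def by (rule n_proportional_to_reflection_form[OF t r fixed t_form])
  have cr: "c * \<phi> r = -2" using n_eq[of r] n_self[OF r] by simp
  define g where "g = t \<circ> s r"
  have g_apply: "toQ (g z - z) = \<phi> z *s (c *s toQ r - q)" for z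
  proof -
    have "toQ (g z) = toQ z + of_int (n r z) *s toQ r + (\<phi> z + of_int (n r z) * \<phi> r) *s q"
      unfolding g_def \<phi>_def by (simp add: t_form s_apply)
    also have "\<phi> z + of_int (n r z) * \<phi> r = \<phi> z + \<phi> z * (c * \<phi> r)"
      by (simp add: n_eq ac_simps)
    also have "\<dots> = - \<phi> z"
      using cr by simp
    finally show ?thesis by (simp add: n_eq vec_eq_iff algebra_simps)
  qed
  have "g (g z - z) = g z - z" for z
  proof -
    have "\<phi> (g z - z) = \<phi> z * (c * \<phi> r - qdot p q)"
      unfolding \<phi>_def g_apply by (simp add: algebra_simps \<phi>_def)
    then have "toQ (g (g z - z) - (g z - z)) = 0"
      using g_apply[of "g z - z"] cr pq by simp
    then show ?thesis by (simp flip: toQ_eq_iff)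
  qed
  moreover have "g \<in> W" unfolding g_def using W_comp[OF tW s_in_W[OF r]] .
  moreover have "Modules.additive g"
    unfolding g_def using additive_comp[OF reflection_additive[OF t] s_additive[OF r]] .
  ultimately have "t \<circ> s r = id"
    using transvection_finite_order_eq_id finite_powers_W unfolding g_def by blast
  then show ?thesis
    using s_apply_apply[OF r] by (metis comp_apply id_apply ext)
qed

lemma reflection_fixes_no_regular:
  assumes tW: "t \<in> W" and t: "reflection t" and x: "regular x"
  shows "t x \<noteq> x"
proof
  assume "t x = x"
  then have "det (qmat t) = 1"
    using det_qmat_eq_sign_char[OF x tW] sign_char_fixing[OF x tW] by simp
  then show False using reflection_det[OF t] by simp
qed

text \<open>If no \<open>n\<^sub>r\<close> vanishes on the fixed lattice of \<open>t\<close>, some fixed point of \<open>t\<close> is regular.\<close>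
lemma reflection_in_W:
  assumes tW: "t \<in> W" and t: "reflection t"
  shows "\<exists>r\<in>R. t = s r"
proof (rule ccontr)
  assume "\<not> ?thesis"
  then have "\<exists>y\<in>{y. t y = y}. n r y \<noteq> 0" if "r \<in> R" for r
    using reflection_eq_s_if_n_vanishes_on_fixed[OF tW t that] that by blast
  then obtain x where "t x = x" and "regular x"
    using exists_nonzero_on_all[OF finite_R, of "{y. t y = y}" n] additive_n
      additive.zero[OF reflection_additive[OF t]] additive.add[OF reflection_additive[OF t]]
      additive_vec_scale_int[OF reflection_additive[OF t]]
    unfolding regular_def by auto
  then show False using reflection_fixes_no_regular[OF tW t] by blast
qed

definition marking :: "('n lat \<Rightarrow> 'n lat) \<Rightarrow> ('n lat \<times> 'n dual) set" where
  "marking \<sigma> = (if \<sigma> \<in> W \<and> reflection \<sigma> then (\<Union>r\<in>{r \<in> R. s r = \<sigma>}. pm r (n r)) else {})"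

lemma rs_to_mrs_eq: "rs_to_mrs (R, n) = (W, marking)"
  unfolding rs_to_mrs_def W_def marking_def s_def by (simp add: Let_def fun_eq_iff)

lemma roots_with_same_s: "r \<in> R \<Longrightarrow> {t \<in> R. s t = s r} = {r, - r}"
  using s_eq_s uminus_in_R s_uminus by fastforce

lemma marking_s: "r \<in> R \<Longrightarrow> marking (s r) = pm r (n r)"
  by (simp add: marking_def s_in_W s_reflection roots_with_same_s n_uminus pm_uminus)

lemma mem_marking_iff: "(b, \<beta>) \<in> marking \<sigma> \<longleftrightarrow> b \<in> R \<and> \<beta> = n b \<and> \<sigma> = s b"
proof
  assume mem: "(b, \<beta>) \<in> marking \<sigma>"
  then have "\<sigma> \<in> W \<and> reflection \<sigma>" unfolding marking_def by (auto split: if_splits)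
  then obtain r where r: "r \<in> R" "\<sigma> = s r" using reflection_in_W by blast
  then have "(b, \<beta>) \<in> pm r (n r)" using mem marking_s by simp
  then show "b \<in> R \<and> \<beta> = n b \<and> \<sigma> = s b"
    using r uminus_in_R n_uminus s_uminus unfolding pm_def by auto
next
  assume "b \<in> R \<and> \<beta> = n b \<and> \<sigma> = s b"
  then show "(b, \<beta>) \<in> marking \<sigma>" using marking_s unfolding pm_def by auto
qed

lemma W_generated_by_reflections: "W = gen_group {\<sigma> \<in> W. reflection \<sigma>}"
proof
  show "W \<subseteq> gen_group {\<sigma> \<in> W. reflection \<sigma>}"
    unfolding W_def by (rule gen_group_mono) (use s_in_W s_reflection W_def in auto)
  show "gen_group {\<sigma> \<in> W. reflection \<sigma>} \<subseteq> W"
    by (rule gen_group_minimal) (use W_id W_comp W_inv in auto)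
qed

lemma marked_reflection_structure: "marked_reflection_structure W marking"
  unfolding marked_reflection_structure_def
proof (intro conjI allI ballI impI)
  show "finite W" by (rule finite_W)
  show "is_subgroup_Aut W" unfolding is_subgroup_Aut_def using W_Aut W_id W_comp W_inv by blast
  show "W = gen_group {\<sigma> \<in> W. reflection \<sigma>}" by (rule W_generated_by_reflections)
next
  fix \<sigma> assume "\<sigma> \<in> W \<and> reflection \<sigma>"
  then obtain r where r: "r \<in> R" "\<sigma> = s r" using reflection_in_W by blast
  then have "strict_marking \<sigma> r (n r)"
    unfolding strict_marking_def hom_Z_iff_additive using additive_n by (simp add: s_apply)
  then show "is_marking \<sigma> (marking \<sigma>)" unfolding is_marking_def using marking_s r by auto
next
  fix \<sigma> assume "\<not> (\<sigma> \<in> W \<and> reflection \<sigma>)"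
  then show "marking \<sigma> = {}" unfolding marking_def by auto
next
  fix w \<sigma> assume w: "w \<in> W" and "\<sigma> \<in> W" and "reflection \<sigma>"
  then obtain r where r: "r \<in> R" "\<sigma> = s r" using reflection_in_W by blast
  have "act_marking w (marking \<sigma>) = pm (w r) (n r \<circ> inv w)"
    unfolding r(2) marking_s[OF r(1)] act_marking_def pm_def using W_uminus[OF w]
    by (auto simp: comp_def)
  also have "n r \<circ> inv w = n (w r)"
    using n_W_apply[OF w r(1)] by (auto simp: fun_eq_iff)
  also have "pm (w r) (n (w r)) = marking (w \<circ> \<sigma> \<circ> inv w)"
    using marking_s[OF W_root[OF w r(1)]] s_W_conj[OF w r(1)] by (simp add: r(2))
  finally show "act_marking w (marking \<sigma>) = marking (w \<circ> \<sigma> \<circ> inv w)" .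
qed

end

lemma rs_to_mrs_inj_on: "inj_on rs_to_mrs {(R, n). root_system R n}"
proof (rule inj_onI, clarsimp)
  fix R R' :: "('n::finite) lat set" and n n'
  assume "root_system R n" and "root_system R' n'" and eq: "rs_to_mrs (R, n) = rs_to_mrs (R', n')"
  interpret A: root_sys R n by unfold_locales fact
  interpret B: root_sys R' n' by unfold_locales fact
  have marking: "A.marking = B.marking"
    using eq A.rs_to_mrs_eq B.rs_to_mrs_eq by simp
  have "R = {b. \<exists>\<sigma> \<beta>. (b, \<beta>) \<in> A.marking \<sigma>}" using A.mem_marking_iff by auto
  also have "\<dots> = R'" unfolding marking using B.mem_marking_iff by auto
  finally have "R = R'" .
  moreover have "n b = n' b" for b
  proof (cases "b \<in> R")
    case True
    then have "(b, n b) \<in> B.marking (A.s b)" using A.mem_marking_iff by (simp flip: marking)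
    then show ?thesis using B.mem_marking_iff by simp
  next
    case False
    then show ?thesis using A.n_notin B.n_notin \<open>R = R'\<close> by simp
  qed
  ultimately show "R = R' \<and> n = n'" by auto
qed

section \<open>From marked reflection structures to root systems\<close>

locale marked_refl_str =
  fixes W :: "(('n::finite) lat \<Rightarrow> 'n lat) set"
    and m :: "('n lat \<Rightarrow> 'n lat) \<Rightarrow> ('n lat \<times> 'n dual) set"
  assumes mrs: "marked_reflection_structure W m"
begin

lemma finite_W: "finite W"
  and W_Aut: "f \<in> W \<Longrightarrow> f \<in> Aut"
  and W_id: "id \<in> W"
  and W_comp: "f \<in> W \<Longrightarrow> g \<in> W \<Longrightarrow> f \<circ> g \<in> W"
  and W_inv: "f \<in> W \<Longrightarrow> inv f \<in> W"
  and W_generated: "W = gen_group {\<sigma> \<in> W. reflection \<sigma>}"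
  and is_marking_m: "\<sigma> \<in> W \<Longrightarrow> reflection \<sigma> \<Longrightarrow> is_marking \<sigma> (m \<sigma>)"
  and m_empty: "\<not> (\<sigma> \<in> W \<and> reflection \<sigma>) \<Longrightarrow> m \<sigma> = {}"
  and act_marking_m:
    "w \<in> W \<Longrightarrow> \<sigma> \<in> W \<Longrightarrow> reflection \<sigma> \<Longrightarrow> act_marking w (m \<sigma>) = m (w \<circ> \<sigma> \<circ> inv w)"
  using mrs unfolding marked_reflection_structure_def is_subgroup_Aut_def
  by (simp_all add: subset_iff)

lemma W_additive: "f \<in> W \<Longrightarrow> Modules.additive f"
  and W_bij: "f \<in> W \<Longrightarrow> bij f"
  using W_Aut by (simp_all add: Aut_iff)

lemma W_apply_inv: "f \<in> W \<Longrightarrow> f (inv f x) = x"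
  using W_bij by (simp add: bij_is_surj surj_f_inv_f)

lemma finite_powers_W: "g \<in> W \<Longrightarrow> finite (range (\<lambda>k. g ^^ k))"
  using finite_W funpow_in_monoid[OF W_id W_comp] by (metis finite_subset image_subsetI)

lemma mem_m_reflection: "(b, \<beta>) \<in> m \<sigma> \<Longrightarrow> \<sigma> \<in> W \<and> reflection \<sigma>"
  using m_empty by fastforce

lemma m_eq_pm: "\<sigma> \<in> W \<Longrightarrow> reflection \<sigma> \<Longrightarrow> \<exists>b \<beta>. strict_marking \<sigma> b \<beta> \<and> m \<sigma> = pm b \<beta>"
  using is_marking_m unfolding is_marking_def by blast

lemma strict_marking_mem_m:
  assumes "(b, \<beta>) \<in> m \<sigma>"
  shows "strict_marking \<sigma> b \<beta>"
proof -
  obtain b0 \<beta>0 where "strict_marking \<sigma> b0 \<beta>0" and "m \<sigma> = pm b0 \<beta>0"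
    using mem_m_reflection[OF assms] m_eq_pm[of \<sigma>] by blast
  with assms show ?thesis
    unfolding pm_def strict_marking_def hom_Z_def by (auto simp: vec_eq_iff)
qed

lemma mem_m_additive: "(b, \<beta>) \<in> m \<sigma> \<Longrightarrow> Modules.additive \<beta>"
  and mem_m_apply: "(b, \<beta>) \<in> m \<sigma> \<Longrightarrow> \<sigma> x = x + \<beta> x *s b"
  using strict_marking_mem_m unfolding strict_marking_def hom_Z_iff_additive by blast+

text \<open>Since \<open>\<sigma>\<close> is an involution other than the identity, \<open>\<sigma> (\<sigma> x) = x + (2 + \<beta> b) \<beta> x b\<close>
  forces \<open>\<beta> b = -2\<close>.\<close>
lemma mem_m_root:
  assumes mem: "(b, \<beta>) \<in> m \<sigma>"
  shows "b \<noteq> 0" and "\<beta> b = -2"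
proof -
  have \<sigma>: "reflection \<sigma>" using mem_m_reflection[OF mem] by blast
  have \<beta>: "Modules.additive \<beta>" using mem_m_additive[OF mem] .
  obtain x where "\<sigma> x \<noteq> x" using reflection_neq_id[OF \<sigma>] by (auto simp: fun_eq_iff)
  then have nonzero: "\<beta> x *s b \<noteq> 0" using mem_m_apply[OF mem, of x] by auto
  then show "b \<noteq> 0" by auto
  have "x = \<sigma> (\<sigma> x)" using reflection_apply_apply[OF \<sigma>] by simp
  also have "\<dots> = x + ((2 + \<beta> b) * \<beta> x) *s b"
    by (simp add: mem_m_apply[OF mem] additive.add[OF \<beta>] additive_scale_int[OF \<beta>] vec_eq_iff
        algebra_simps)
  finally have "((2 + \<beta> b) * \<beta> x) *s b = 0" by simp
  then show "\<beta> b = -2" using nonzero by (auto simp: vec_eq_iff)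
qed

text \<open>Two markings with parallel vectors: \<open>\<sigma> \<circ> \<sigma>'\<close> is a transvection along \<open>b\<close> in \<open>W\<close>.\<close>
lemma parallel_markings_same_reflection:
  assumes mem: "(b, \<beta>) \<in> m \<sigma>" and mem': "(k *s b, \<beta>') \<in> m \<sigma>'"
  shows "\<sigma> = \<sigma>'"
proof -
  have \<beta>: "Modules.additive \<beta>" and \<beta>': "Modules.additive \<beta>'"
    using mem_m_additive mem mem' by auto
  have \<beta>b: "\<beta> b = -2" using mem_m_root(2)[OF mem] .
  have k\<beta>'b: "k * \<beta>' b = -2" using mem_m_root(2)[OF mem'] additive_scale_int[OF \<beta>'] by simp
  define g where "g = \<sigma> \<circ> \<sigma>'"
  have g_apply: "g x = x + (\<beta> x - k * \<beta>' x) *s b" for x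
    using \<beta>b by (simp add: g_def mem_m_apply[OF mem] mem_m_apply[OF mem'] additive.add[OF \<beta>]
        additive_scale_int[OF \<beta>] vec_eq_iff algebra_simps)
  have "g (g x - x) = g x - x" for x
  proof -
    have displacement: "g x - x = (\<beta> x - k * \<beta>' x) *s b" by (simp add: g_apply)
    have "\<beta> (g x - x) - k * \<beta>' (g x - x) = (\<beta> x - k * \<beta>' x) * (\<beta> b - k * \<beta>' b)"
      by (simp only: displacement additive_scale_int[OF \<beta>] additive_scale_int[OF \<beta>'])
        (simp add: algebra_simps)
    also have "\<dots> = 0" using \<beta>b k\<beta>'b by simp
    finally have "\<beta> (g x - x) - k * \<beta>' (g x - x) = 0" .
    then show ?thesis using g_apply[of "g x - x"] by (simp add: vec_eq_iff)
  qed
  moreover have "g \<in> W" unfolding g_def using W_comp mem_m_reflection mem mem' by blast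
  ultimately have "\<sigma> \<circ> \<sigma>' = id"
    using transvection_finite_order_eq_id W_additive finite_powers_W unfolding g_def by blast
  moreover have "\<sigma>' \<circ> \<sigma>' = id"
    using reflection_involutive mem_m_reflection[OF mem'] by blast
  ultimately show ?thesis by (metis comp_assoc comp_id)
qed

lemma mem_m_cases:
  assumes mem: "(b, \<beta>) \<in> m \<sigma>" and mem': "(b', \<beta>') \<in> m \<sigma>"
  shows "(b' = b \<and> \<beta>' = \<beta>) \<or> (b' = - b \<and> \<beta>' = (\<lambda>x. - \<beta> x))"
proof -
  obtain b0 \<beta>0 where m\<sigma>: "m \<sigma> = pm b0 \<beta>0"
    using mem_m_reflection[OF mem] m_eq_pm[of \<sigma>] by blast
  then have "b0 \<noteq> - b0"
    using mem_m_root(1)[of b0 \<beta>0 \<sigma>] unfolding pm_def by (auto simp: vec_eq_iff)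
  then show ?thesis using mem mem' m\<sigma> unfolding pm_def by auto
qed

definition roots :: "'n lat set" where
  "roots = {b. \<exists>\<sigma> \<beta>. (b, \<beta>) \<in> m \<sigma>}"

text \<open>The choice is unique by \<open>coroot_eq\<close>; off \<open>roots\<close> it follows the normalisation in
  \<open>root_system\<close>.\<close>
definition coroot :: "'n lat \<Rightarrow> 'n dual" where
  "coroot b = (if b \<in> roots then (SOME \<beta>. \<exists>\<sigma>. (b, \<beta>) \<in> m \<sigma>) else (\<lambda>_. 0))"

lemma coroot_eq:
  assumes mem: "(b, \<beta>) \<in> m \<sigma>"
  shows "coroot b = \<beta>"
proof -
  have "\<exists>\<sigma>'. (b, coroot b) \<in> m \<sigma>'"
    using someI_ex[of "\<lambda>\<beta>. \<exists>\<sigma>. (b, \<beta>) \<in> m \<sigma>"] mem unfolding coroot_def roots_def by auto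
  then obtain \<sigma>' where mem': "(b, coroot b) \<in> m \<sigma>'" by blast
  have "\<sigma>' = \<sigma>" using parallel_markings_same_reflection[OF mem', of 1] mem by simp
  then have "coroot b = \<beta> \<or> b = - b"
    using mem_m_cases[OF mem] mem' by blast
  moreover have "b \<noteq> - b" using mem_m_root(1)[OF mem] by (auto simp: vec_eq_iff)
  ultimately show ?thesis by blast
qed

lemma mem_roots_iff: "b \<in> roots \<longleftrightarrow> (\<exists>\<sigma>. (b, coroot b) \<in> m \<sigma>)"
  unfolding roots_def using coroot_eq by blast

lemma root_refl_coroot: "(b, \<beta>) \<in> m \<sigma> \<Longrightarrow> root_refl b (coroot b) = \<sigma>"
  by (rule ext) (simp add: root_refl_def coroot_eq mem_m_apply)

lemma finite_roots: "finite roots"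
proof -
  have "finite (m \<sigma>)" for \<sigma>
  proof (cases "\<sigma> \<in> W \<and> reflection \<sigma>")
    case True
    then obtain b \<beta> where "m \<sigma> = pm b \<beta>" using m_eq_pm[of \<sigma>] by blast
    then show ?thesis by (simp add: pm_def)
  qed (simp add: m_empty)
  moreover have "roots \<subseteq> (\<Union>\<sigma>\<in>W. fst ` m \<sigma>)"
    unfolding roots_def using mem_m_reflection by force
  ultimately show ?thesis using finite_W finite_subset by blast
qed

lemma displacement_in_span_roots:
  assumes u: "u \<in> W"
  shows "toQ (x - u x) \<in> vec.span (toQ ` roots)"
proof -
  have "u \<in> gen_group {\<sigma> \<in> W. reflection \<sigma>}" using u W_generated by simp
  then show ?thesis
  proof (induction arbitrary: x rule: gen_group_induct)
    case id
    then show ?case by (simp add: vec.span_zero)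
  next
    case (base \<sigma>)
    then obtain b \<beta> where "m \<sigma> = pm b \<beta>" using m_eq_pm[of \<sigma>] by blast
    then have mem: "(b, \<beta>) \<in> m \<sigma>" unfolding pm_def by simp
    then have "toQ (x - \<sigma> x) = of_int (- \<beta> x) *s toQ b"
      by (simp add: mem_m_apply vec_eq_iff)
    moreover have "b \<in> roots" unfolding roots_def using mem by blast
    ultimately show ?case by (simp add: vec.span_base vec.span_scale vec.span_neg)
  next
    case (comp f g)
    have "x - (f \<circ> g) x = (x - g x) + (g x - f (g x))" by simp
    then show ?case using comp.IH by (metis toQ_add vec.span_add)
  next
    case (inv f)
    have "f \<in> W" using inv.hyps W_generated by simp
    then have "x - inv f x = - (inv f x - f (inv f x))"
      by (simp add: W_apply_inv)
    then show ?case using inv.IH by (metis toQ_uminus vec.span_neg)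
  qed
qed

lemma W_fixes_sum_orbit:
  assumes u: "u \<in> W"
  shows "u (\<Sum>w\<in>W. w x) = (\<Sum>w\<in>W. w x)"
proof -
  have "bij_betw (\<lambda>w. u \<circ> w) W W"
  proof -
    have "(\<lambda>w. u \<circ> w) ` W \<subseteq> W" using W_comp[OF u] by blast
    moreover have "inj_on (\<lambda>w. u \<circ> w) W"
      using W_bij[OF u] by (intro inj_onI) (metis bij_is_inj fun.inj_map_strong inj_eq)
    ultimately show ?thesis unfolding bij_betw_def using endo_inj_surj[OF finite_W] by blast
  qed
  then have "(\<Sum>w\<in>W. (u \<circ> w) x) = (\<Sum>w\<in>W. w x)"
    by (rule sum.reindex_bij_betw)
  moreover have "u (\<Sum>w\<in>W. w x) = (\<Sum>w\<in>W. (u \<circ> w) x)"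
    unfolding comp_apply by (rule additive.sum[OF W_additive[OF u]])
  ultimately show ?thesis by simp
qed

lemma sum_orbit_in_kernel: "(\<Sum>w\<in>W. w x) \<in> (\<Inter>r\<in>roots. {y. coroot r y = 0})"
proof (intro INT_I CollectI)
  fix r assume "r \<in> roots"
  then obtain \<sigma> where mem: "(r, coroot r) \<in> m \<sigma>" using mem_roots_iff by blast
  have "\<sigma> (\<Sum>w\<in>W. w x) = (\<Sum>w\<in>W. w x)"
    using W_fixes_sum_orbit mem_m_reflection[OF mem] by blast
  then have "coroot r (\<Sum>w\<in>W. w x) *s r = 0" using mem_m_apply[OF mem] by simp
  then show "coroot r (\<Sum>w\<in>W. w x) = 0" using mem_m_root(1)[OF mem] by (auto simp: vec_eq_iff)
qed

text \<open>\<open>|W| x\<close> is the orbit sum, which lies in the common kernel, plus the displacements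
  \<open>x - w x\<close>, which lie in the span of the roots.\<close>
lemma span_roots_kernel: "vec.span (toQ ` (roots \<union> (\<Inter>r\<in>roots. {x. coroot r x = 0}))) = UNIV"
proof -
  let ?S = "vec.span (toQ ` (roots \<union> (\<Inter>r\<in>roots. {x. coroot r x = 0})))"
  have "toQ x \<in> ?S" for x
  proof -
    have "int (card W) *s x = (\<Sum>w\<in>W. w x) + (\<Sum>w\<in>W. x - w x)"
      unfolding vec_eq_iff
      by (simp only: vector_add_component vector_smult_component sum_component vector_minus_component)
        (simp add: sum_subtractf)
    then have "toQ (int (card W) *s x) = toQ (\<Sum>w\<in>W. w x) + (\<Sum>w\<in>W. toQ (x - w x))"
      by (simp only: toQ_add toQ_sum)
    then have "of_nat (card W) *s toQ x = toQ (\<Sum>w\<in>W. w x) + (\<Sum>w\<in>W. toQ (x - w x))"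
      by (simp only: toQ_scale of_int_of_nat_eq)
    moreover have "toQ (\<Sum>w\<in>W. w x) \<in> ?S"
      using sum_orbit_in_kernel by (intro vec.span_base) blast
    moreover have "(\<Sum>w\<in>W. toQ (x - w x)) \<in> ?S"
    proof (rule vec.span_sum)
      have "vec.span (toQ ` roots) \<subseteq> ?S" by (rule vec.span_mono) blast
      then show "toQ (x - w x) \<in> ?S" if "w \<in> W" for w
        using displacement_in_span_roots[OF that] by blast
    qed
    ultimately have "of_nat (card W) *s toQ x \<in> ?S" by (simp add: vec.span_add)
    then have "(1 / of_nat (card W)) *s (of_nat (card W) *s toQ x) \<in> ?S" by (rule vec.span_scale)
    moreover have "card W > 0" using finite_W W_id card_gt_0_iff by blast
    ultimately show ?thesis by simp
  qed
  then have "(\<Sum>j\<in>UNIV. v $ j *s toQ (axis j 1)) \<in> ?S" for v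
    by (intro vec.span_sum vec.span_scale) blast
  then show ?thesis by (simp add: basis_expansion, blast)
qed

lemma multiple_in_roots:
  assumes r: "r \<in> roots" and kr: "k *s r \<in> roots"
  shows "k = 1 \<or> k = -1"
proof -
  obtain \<sigma> \<sigma>' where mem: "(r, coroot r) \<in> m \<sigma>" and mem': "(k *s r, coroot (k *s r)) \<in> m \<sigma>'"
    using r kr mem_roots_iff by blast
  then have "\<sigma> = \<sigma>'" by (rule parallel_markings_same_reflection)
  then have "k *s r = r \<or> k *s r = - r" using mem_m_cases[OF mem] mem' by blast
  moreover obtain i where i: "r $ i \<noteq> 0" using mem_m_root(1)[OF mem] by (auto simp: vec_eq_iff)
  ultimately have "k * r $ i = r $ i \<or> k * r $ i = - r $ i"
    by (metis vector_smult_component vector_uminus_component)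
  then show ?thesis
    using i by (metis mult_cancel_right mult_minus_left mult_1)
qed

lemma root_refl_root_in_roots:
  assumes r: "r \<in> roots" and t: "t \<in> roots"
  shows "t + coroot r t *s r \<in> roots"
proof -
  obtain \<sigma> \<tau> where mem: "(r, coroot r) \<in> m \<sigma>" and mem': "(t, coroot t) \<in> m \<tau>"
    using r t mem_roots_iff by blast
  have "(\<sigma> t, coroot t \<circ> inv \<sigma>) \<in> act_marking \<sigma> (m \<tau>)"
    unfolding act_marking_def using mem' by force
  then have "(\<sigma> t, coroot t \<circ> inv \<sigma>) \<in> m (\<sigma> \<circ> \<tau> \<circ> inv \<sigma>)"
    using act_marking_m mem_m_reflection mem mem' by metis
  then show ?thesis unfolding roots_def using mem_m_apply[OF mem, of t] by auto
qed

lemma root_system_roots: "root_system roots coroot"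
  unfolding root_system_def hom_Z_iff_additive
proof (intro conjI ballI allI impI)
  show "\<And>r. r \<in> roots \<Longrightarrow> Modules.additive (coroot r)"
    and "\<And>r. r \<in> roots \<Longrightarrow> coroot r r = -2"
    using mem_roots_iff mem_m_additive mem_m_root(2) by blast+
  show "\<And>r. r \<notin> roots \<Longrightarrow> coroot r = (\<lambda>_. 0)"
    unfolding coroot_def by simp
qed (use finite_roots span_roots_kernel multiple_in_roots root_refl_root_in_roots in auto)

lemma root_refl_coroot_image: "(\<lambda>r. root_refl r (coroot r)) ` roots = {\<sigma> \<in> W. reflection \<sigma>}"
proof
  show "(\<lambda>r. root_refl r (coroot r)) ` roots \<subseteq> {\<sigma> \<in> W. reflection \<sigma>}"
    using mem_roots_iff root_refl_coroot mem_m_reflection by force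
  show "{\<sigma> \<in> W. reflection \<sigma>} \<subseteq> (\<lambda>r. root_refl r (coroot r)) ` roots"
  proof
    fix \<sigma> assume "\<sigma> \<in> {\<sigma> \<in> W. reflection \<sigma>}"
    then obtain b \<beta> where "m \<sigma> = pm b \<beta>" using m_eq_pm[of \<sigma>] by blast
    then have mem: "(b, \<beta>) \<in> m \<sigma>" unfolding pm_def by simp
    then have "b \<in> roots" unfolding roots_def by blast
    then show "\<sigma> \<in> (\<lambda>r. root_refl r (coroot r)) ` roots" using root_refl_coroot[OF mem] by force
  qed
qed

lemma m_eq_roots_union:
  assumes "\<sigma> \<in> W" and "reflection \<sigma>"
  shows "(\<Union>r\<in>{r \<in> roots. root_refl r (coroot r) = \<sigma>}. pm r (coroot r)) = m \<sigma>"
proof -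
  obtain b \<beta> where m\<sigma>: "m \<sigma> = pm b \<beta>" using m_eq_pm[OF assms] by blast
  then have mem: "(b, \<beta>) \<in> m \<sigma>" and mem': "(- b, \<lambda>x. - \<beta> x) \<in> m \<sigma>"
    by (simp_all add: pm_def)
  have "{r \<in> roots. root_refl r (coroot r) = \<sigma>} = {b, - b}"
  proof
    show "{r \<in> roots. root_refl r (coroot r) = \<sigma>} \<subseteq> {b, - b}"
      using mem_roots_iff root_refl_coroot m\<sigma> unfolding pm_def by fastforce
    show "{b, - b} \<subseteq> {r \<in> roots. root_refl r (coroot r) = \<sigma>}"
      using mem mem' root_refl_coroot unfolding roots_def by blast
  qed
  then show ?thesis
    using m\<sigma> coroot_eq[OF mem] coroot_eq[OF mem'] pm_uminus[of b \<beta>] by simp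
qed

lemma rs_to_mrs_roots: "rs_to_mrs (roots, coroot) = (W, m)"
proof -
  have "gen_group ((\<lambda>r. root_refl r (coroot r)) ` roots) = W"
    using root_refl_coroot_image W_generated by simp
  moreover have "(\<lambda>\<sigma>. if \<sigma> \<in> W \<and> reflection \<sigma>
      then (\<Union>r\<in>{r \<in> roots. root_refl r (coroot r) = \<sigma>}. pm r (coroot r)) else {}) = m"
    by (rule ext) (simp add: m_eq_roots_union m_empty)
  ultimately show ?thesis by (simp add: rs_to_mrs_def Let_def)
qed

end

lemma rs_to_mrs_image:
  "rs_to_mrs ` {(R, n). root_system R n} = {(W, m). marked_reflection_structure W m}"
proof
  show "rs_to_mrs ` {(R, n). root_system R n} \<subseteq> {(W, m). marked_reflection_structure W m}"
    using root_sys.rs_to_mrs_eq root_sys.marked_reflection_structure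
    by (fastforce simp: root_sys_def)
  show "{(W, m). marked_reflection_structure W m} \<subseteq> rs_to_mrs ` {(R, n). root_system R n}"
  proof clarify
    fix W :: "(('n::finite) lat \<Rightarrow> 'n lat) set" and m
    assume "marked_reflection_structure W m"
    then interpret marked_refl_str W m by unfold_locales
    show "(W, m) \<in> rs_to_mrs ` {(R, n). root_system R n}"
    proof (rule image_eqI)
      show "(W, m) = rs_to_mrs (roots, coroot)" using rs_to_mrs_roots by simp
      show "(roots, coroot) \<in> {(R, n). root_system R n}" using root_system_roots by simp
    qed
  qed
qed

theorem proposition2p15:
  shows "bij_betw (rs_to_mrs :: ('n::finite) lat set \<times> ('n lat \<Rightarrow> 'n dual) \<Rightarrow> _)
           {(R, n). root_system R n}
           {(W, m). marked_reflection_structure W m}"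
  unfolding bij_betw_def using rs_to_mrs_inj_on rs_to_mrs_image by blast

end
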